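(* Let $K$ be a commutative ring with $1$, let $A$ be a $K$-algebra, and let $B$ be an ideal of $A$. If both $B$ and $A/B$ are finitely generated $K$-algebras, then $A$ is a finitely generated $K$-algebra. If both $B$ and $A/B$ are finitely presented $K$-algebras, then $A$ is a finitely presented $K$-algebra.
   Context: A $K$-algebra is a structure that is simultaneously an associative ring (not necessarily with identity) and a $K$-module, with $K$-bilinear multiplication. The free $K$-algebra $K\langle X\rangle$ on a set $X$ is the semigroup ring over $K$ of the free semigroup $X^+$ (no identity). A $K$-algebra is finitely generated if it is isomorphic to $K\langle X\rangle/I$ with $X$ finite and $I$ an ideal; finitely presented if moreover $I$ can be chosen finitely generated as an ideal. *)

theory Defs
  imports "HOL-Algebra.Module" "HOL-Algebra.FiniteProduct"
begin

text \<open>K-algebras in the sense of the paper: associative, not necessarily unital,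
  with K-bilinear multiplication.  An algebra is represented by a module record;
  its one field is ignored.\<close>

definition K_algebra :: "('k,'e) ring_scheme \<Rightarrow> ('k,'a,'m) module_scheme \<Rightarrow> bool" where
  "K_algebra K A \<longleftrightarrow> module K A \<and>
     (\<forall>x\<in>carrier A. \<forall>y\<in>carrier A. x \<otimes>\<^bsub>A\<^esub> y \<in> carrier A) \<and>
     (\<forall>x\<in>carrier A. \<forall>y\<in>carrier A. \<forall>z\<in>carrier A.
        (x \<otimes>\<^bsub>A\<^esub> y) \<otimes>\<^bsub>A\<^esub> z = x \<otimes>\<^bsub>A\<^esub> (y \<otimes>\<^bsub>A\<^esub> z)) \<and>
     (\<forall>x\<in>carrier A. \<forall>y\<in>carrier A. \<forall>z\<in>carrier A.
        x \<otimes>\<^bsub>A\<^esub> (y \<oplus>\<^bsub>A\<^esub> z) = x \<otimes>\<^bsub>A\<^esub> y \<oplus>\<^bsub>A\<^esub> x \<otimes>\<^bsub>A\<^esub> z \<and>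
        (x \<oplus>\<^bsub>A\<^esub> y) \<otimes>\<^bsub>A\<^esub> z = x \<otimes>\<^bsub>A\<^esub> z \<oplus>\<^bsub>A\<^esub> y \<otimes>\<^bsub>A\<^esub> z) \<and>
     (\<forall>k\<in>carrier K. \<forall>x\<in>carrier A. \<forall>y\<in>carrier A.
        (k \<odot>\<^bsub>A\<^esub> x) \<otimes>\<^bsub>A\<^esub> y = k \<odot>\<^bsub>A\<^esub> (x \<otimes>\<^bsub>A\<^esub> y) \<and>
        x \<otimes>\<^bsub>A\<^esub> (k \<odot>\<^bsub>A\<^esub> y) = k \<odot>\<^bsub>A\<^esub> (x \<otimes>\<^bsub>A\<^esub> y))"

definition alg_ideal :: "('k,'e) ring_scheme \<Rightarrow> ('k,'a,'m) module_scheme \<Rightarrow> 'a set \<Rightarrow> bool" where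
  "alg_ideal K A I \<longleftrightarrow> I \<subseteq> carrier A \<and> \<zero>\<^bsub>A\<^esub> \<in> I \<and>
     (\<forall>x\<in>I. \<forall>y\<in>I. x \<oplus>\<^bsub>A\<^esub> y \<in> I) \<and>
     (\<forall>x\<in>I. \<ominus>\<^bsub>A\<^esub> x \<in> I) \<and>
     (\<forall>k\<in>carrier K. \<forall>x\<in>I. k \<odot>\<^bsub>A\<^esub> x \<in> I) \<and>
     (\<forall>a\<in>carrier A. \<forall>x\<in>I. a \<otimes>\<^bsub>A\<^esub> x \<in> I \<and> x \<otimes>\<^bsub>A\<^esub> a \<in> I)"

definition fg_ideal :: "('k,'e) ring_scheme \<Rightarrow> ('k,'a,'m) module_scheme \<Rightarrow> 'a set \<Rightarrow> bool" where
  "fg_ideal K A I \<longleftrightarrow> alg_ideal K A I \<and>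
     (\<exists>S. finite S \<and> S \<subseteq> carrier A \<and> I = \<Inter> {J. alg_ideal K A J \<and> S \<subseteq> J})"

definition alg_coset :: "('k,'a,'m) module_scheme \<Rightarrow> 'a set \<Rightarrow> 'a \<Rightarrow> 'a set" where
  "alg_coset A I a = {a \<oplus>\<^bsub>A\<^esub> i | i. i \<in> I}"

definition qrep :: "'a set \<Rightarrow> 'a" where
  "qrep X = (SOME x. x \<in> X)"

definition quot_alg :: "('k,'e) ring_scheme \<Rightarrow> ('k,'a,'m) module_scheme \<Rightarrow> 'a set \<Rightarrow> ('k, 'a set) module" where
  "quot_alg K A I =
     \<lparr> carrier = alg_coset A I ` carrier A,
       monoid.mult = (\<lambda>X Y. alg_coset A I (qrep X \<otimes>\<^bsub>A\<^esub> qrep Y)),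
       one = undefined,
       zero = I,
       add = (\<lambda>X Y. alg_coset A I (qrep X \<oplus>\<^bsub>A\<^esub> qrep Y)),
       smult = (\<lambda>k X. alg_coset A I (k \<odot>\<^bsub>A\<^esub> qrep X)) \<rparr>"

definition alg_iso :: "('k,'e) ring_scheme \<Rightarrow> ('k,'a,'m) module_scheme \<Rightarrow> ('k,'b,'n) module_scheme \<Rightarrow> bool" where
  "alg_iso K A C \<longleftrightarrow> (\<exists>f. bij_betw f (carrier A) (carrier C) \<and>
     (\<forall>x\<in>carrier A. \<forall>y\<in>carrier A.
        f (x \<oplus>\<^bsub>A\<^esub> y) = f x \<oplus>\<^bsub>C\<^esub> f y \<and> f (x \<otimes>\<^bsub>A\<^esub> y) = f x \<otimes>\<^bsub>C\<^esub> f y) \<and>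
     (\<forall>k\<in>carrier K. \<forall>x\<in>carrier A. f (k \<odot>\<^bsub>A\<^esub> x) = k \<odot>\<^bsub>C\<^esub> f x))"

text \<open>The free K-algebra K<X> on a set X (of natural numbers, WLOG for finite X):
  the semigroup ring of the free semigroup X^+ (nonempty words over X),
  i.e. finitely supported K-valued functions on nonempty words, with convolution.\<close>

definition free_alg :: "('k,'e) ring_scheme \<Rightarrow> nat set \<Rightarrow> ('k, nat list \<Rightarrow> 'k) module" where
  "free_alg K X =
     \<lparr> carrier = {f. (\<forall>w. f w \<in> carrier K) \<and> finite {w. f w \<noteq> \<zero>\<^bsub>K\<^esub>} \<and>
                    (\<forall>w. f w \<noteq> \<zero>\<^bsub>K\<^esub> \<longrightarrow> w \<noteq> [] \<and> set w \<subseteq> X)},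
       monoid.mult = (\<lambda>f g w. finsum K (\<lambda>(u, v). f u \<otimes>\<^bsub>K\<^esub> g v)
                                {(u, v). u @ v = w \<and> u \<noteq> [] \<and> v \<noteq> []}),
       one = undefined,
       zero = (\<lambda>w. \<zero>\<^bsub>K\<^esub>),
       add = (\<lambda>f g w. f w \<oplus>\<^bsub>K\<^esub> g w),
       smult = (\<lambda>k f w. k \<otimes>\<^bsub>K\<^esub> f w) \<rparr>"

definition fg_algebra :: "('k,'e) ring_scheme \<Rightarrow> ('k,'a,'m) module_scheme \<Rightarrow> bool" where
  "fg_algebra K A \<longleftrightarrow> (\<exists>X I. finite X \<and> alg_ideal K (free_alg K X) I \<and>
      alg_iso K A (quot_alg K (free_alg K X) I))"

definition fp_algebra :: "('k,'e) ring_scheme \<Rightarrow> ('k,'a,'m) module_scheme \<Rightarrow> bool" where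
  "fp_algebra K A \<longleftrightarrow> (\<exists>X I. finite X \<and> fg_ideal K (free_alg K X) I \<and>
      alg_iso K A (quot_alg K (free_alg K X) I))"

end

theory Submission
  imports Defs
begin

(* Present B as F<Y>/J and A/B as F<X>/I, and let Z be the disjoint union of X and Y.  Sending
   the generators from Y to their images in B and those from X to lifts in A of their images in
   A/B defines a homomorphism e : F<Z> -> A.  It is onto, because every element of A differs by
   an element of B = e(F<Y>) from the image of an element of F<X>.

   If I and J are finitely generated, let N be the ideal generated by the relators of J and by
   the differences p - q, where p is a lifted relator of I or a mixed product x y, y x of
   generators x from X and y from Y, and q in F<Y> has the same image as p (which exists since
   e p lies in B).  The mixed relations make F<Y> + N closed under multiplication by the
   generators from X, so F<Y> + N is an ideal, and it contains the image of I.  Every element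
   of F<Z> is the image of some u in F<X> plus an element of F<Y> + N; for an element of ker e
   the image of u in A/B vanishes, so u lies in I and the whole element lies in F<Y> + N.  Its
   component r in F<Y> satisfies e r = 0, so r lies in J, and ker e = N. *)

section \<open>Algebras, homomorphisms and ideals\<close>

locale kalgebra = module K A
  for K :: "('k,'e) ring_scheme" (structure) and A :: "('k,'a,'m) module_scheme" (structure) +
  assumes m_closed [intro, simp]: "\<lbrakk>x \<in> carrier A; y \<in> carrier A\<rbrakk> \<Longrightarrow> x \<otimes>\<^bsub>A\<^esub> y \<in> carrier A"
    and m_assoc: "\<lbrakk>x \<in> carrier A; y \<in> carrier A; z \<in> carrier A\<rbrakk> \<Longrightarrow>
      (x \<otimes>\<^bsub>A\<^esub> y) \<otimes>\<^bsub>A\<^esub> z = x \<otimes>\<^bsub>A\<^esub> (y \<otimes>\<^bsub>A\<^esub> z)"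
    and r_distr: "\<lbrakk>x \<in> carrier A; y \<in> carrier A; z \<in> carrier A\<rbrakk> \<Longrightarrow>
      x \<otimes>\<^bsub>A\<^esub> (y \<oplus>\<^bsub>A\<^esub> z) = x \<otimes>\<^bsub>A\<^esub> y \<oplus>\<^bsub>A\<^esub> x \<otimes>\<^bsub>A\<^esub> z"
    and l_distr: "\<lbrakk>x \<in> carrier A; y \<in> carrier A; z \<in> carrier A\<rbrakk> \<Longrightarrow>
      (x \<oplus>\<^bsub>A\<^esub> y) \<otimes>\<^bsub>A\<^esub> z = x \<otimes>\<^bsub>A\<^esub> z \<oplus>\<^bsub>A\<^esub> y \<otimes>\<^bsub>A\<^esub> z"
    and smult_mult_left: "\<lbrakk>k \<in> carrier K; x \<in> carrier A; y \<in> carrier A\<rbrakk> \<Longrightarrow>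
      (k \<odot>\<^bsub>A\<^esub> x) \<otimes>\<^bsub>A\<^esub> y = k \<odot>\<^bsub>A\<^esub> (x \<otimes>\<^bsub>A\<^esub> y)"
    and smult_mult_right: "\<lbrakk>k \<in> carrier K; x \<in> carrier A; y \<in> carrier A\<rbrakk> \<Longrightarrow>
      x \<otimes>\<^bsub>A\<^esub> (k \<odot>\<^bsub>A\<^esub> y) = k \<odot>\<^bsub>A\<^esub> (x \<otimes>\<^bsub>A\<^esub> y)"

lemma kalgebra_iff_K_algebra: "kalgebra K A \<longleftrightarrow> K_algebra K A"
  unfolding K_algebra_def kalgebra_def kalgebra_axioms_def by auto

context kalgebra begin

lemma a_inv_eq_smult: "x \<in> carrier A \<Longrightarrow> \<ominus>\<^bsub>A\<^esub> x = (\<ominus>\<^bsub>K\<^esub> \<one>\<^bsub>K\<^esub>) \<odot>\<^bsub>A\<^esub> x"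
  using smult_l_minus[of "\<one>\<^bsub>K\<^esub>" x] by simp

lemma l_null [simp]: "x \<in> carrier A \<Longrightarrow> \<zero>\<^bsub>A\<^esub> \<otimes>\<^bsub>A\<^esub> x = \<zero>\<^bsub>A\<^esub>"
  using smult_mult_left[of "\<zero>\<^bsub>K\<^esub>" "\<zero>\<^bsub>A\<^esub>" x] by simp

lemma r_null [simp]: "x \<in> carrier A \<Longrightarrow> x \<otimes>\<^bsub>A\<^esub> \<zero>\<^bsub>A\<^esub> = \<zero>\<^bsub>A\<^esub>"
  using smult_mult_right[of "\<zero>\<^bsub>K\<^esub>" x "\<zero>\<^bsub>A\<^esub>"] by simp

lemma l_minus: "\<lbrakk>x \<in> carrier A; y \<in> carrier A\<rbrakk> \<Longrightarrow> (\<ominus>\<^bsub>A\<^esub> x) \<otimes>\<^bsub>A\<^esub> y = \<ominus>\<^bsub>A\<^esub> (x \<otimes>\<^bsub>A\<^esub> y)"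
  by (simp add: a_inv_eq_smult smult_mult_left)

lemma r_minus: "\<lbrakk>x \<in> carrier A; y \<in> carrier A\<rbrakk> \<Longrightarrow> x \<otimes>\<^bsub>A\<^esub> (\<ominus>\<^bsub>A\<^esub> y) = \<ominus>\<^bsub>A\<^esub> (x \<otimes>\<^bsub>A\<^esub> y)"
  by (simp add: a_inv_eq_smult smult_mult_right)

lemma l_diff_distr: "\<lbrakk>x \<in> carrier A; y \<in> carrier A; z \<in> carrier A\<rbrakk> \<Longrightarrow>
    (x \<ominus>\<^bsub>A\<^esub> y) \<otimes>\<^bsub>A\<^esub> z = x \<otimes>\<^bsub>A\<^esub> z \<ominus>\<^bsub>A\<^esub> y \<otimes>\<^bsub>A\<^esub> z"
  by (simp add: a_minus_def l_distr l_minus)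

lemma r_diff_distr: "\<lbrakk>x \<in> carrier A; y \<in> carrier A; z \<in> carrier A\<rbrakk> \<Longrightarrow>
    z \<otimes>\<^bsub>A\<^esub> (x \<ominus>\<^bsub>A\<^esub> y) = z \<otimes>\<^bsub>A\<^esub> x \<ominus>\<^bsub>A\<^esub> z \<otimes>\<^bsub>A\<^esub> y"
  by (simp add: a_minus_def r_distr r_minus)

end

lemma (in abelian_group) diff_eq_zero_iff:
  "\<lbrakk>x \<in> carrier G; y \<in> carrier G\<rbrakk> \<Longrightarrow> x \<ominus> y = \<zero> \<longleftrightarrow> x = y"
  by (metis a_minus_def add.inv_closed add.inv_solve_right l_zero minus_equality r_neg)

lemma (in abelian_group) add_diff_add:
  "\<lbrakk>a \<in> carrier G; b \<in> carrier G; c \<in> carrier G; d \<in> carrier G\<rbrakk> \<Longrightarrow>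
    (a \<oplus> b) \<ominus> (c \<oplus> d) = (a \<ominus> c) \<oplus> (b \<ominus> d)"
  by (simp add: a_minus_def minus_add a_ac)

lemma (in abelian_group) add_diff_cancel:
  "\<lbrakk>a \<in> carrier G; b \<in> carrier G\<rbrakk> \<Longrightarrow> (a \<oplus> b) \<ominus> a = b"
  by (metis a_closed a_comm a_minus_def add.inv_solve_right)

lemma (in abelian_group) diff_add_diff:
  "\<lbrakk>a \<in> carrier G; b \<in> carrier G; c \<in> carrier G\<rbrakk> \<Longrightarrow> a \<ominus> c = (a \<ominus> b) \<oplus> (b \<ominus> c)"
  by (simp add: a_minus_def a_assoc r_neg1)

lemma (in abelian_group) diff_zero: "x \<in> carrier G \<Longrightarrow> x \<ominus> \<zero> = x"
  using add_diff_cancel[OF zero_closed, of x] by simp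

lemma (in abelian_group) add_diff_cancel_left:
  "\<lbrakk>a \<in> carrier G; b \<in> carrier G\<rbrakk> \<Longrightarrow> a \<oplus> (b \<ominus> a) = b"
  by (simp add: a_minus_def a_lcomm[of a b] r_neg)

definition alg_hom :: "('k,'e) ring_scheme \<Rightarrow> ('k,'a,'m) module_scheme \<Rightarrow> ('k,'b,'n) module_scheme \<Rightarrow>
    ('a \<Rightarrow> 'b) \<Rightarrow> bool" where
  "alg_hom K A C f \<longleftrightarrow> f \<in> carrier A \<rightarrow> carrier C \<and>
     (\<forall>x\<in>carrier A. \<forall>y\<in>carrier A. f (x \<oplus>\<^bsub>A\<^esub> y) = f x \<oplus>\<^bsub>C\<^esub> f y \<and> f (x \<otimes>\<^bsub>A\<^esub> y) = f x \<otimes>\<^bsub>C\<^esub> f y) \<and>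
     (\<forall>k\<in>carrier K. \<forall>x\<in>carrier A. f (k \<odot>\<^bsub>A\<^esub> x) = k \<odot>\<^bsub>C\<^esub> f x)"

lemma alg_homI:
  assumes "\<And>x. x \<in> carrier A \<Longrightarrow> f x \<in> carrier C"
    and "\<And>x y. \<lbrakk>x \<in> carrier A; y \<in> carrier A\<rbrakk> \<Longrightarrow> f (x \<oplus>\<^bsub>A\<^esub> y) = f x \<oplus>\<^bsub>C\<^esub> f y"
    and "\<And>x y. \<lbrakk>x \<in> carrier A; y \<in> carrier A\<rbrakk> \<Longrightarrow> f (x \<otimes>\<^bsub>A\<^esub> y) = f x \<otimes>\<^bsub>C\<^esub> f y"
    and "\<And>k x. \<lbrakk>k \<in> carrier K; x \<in> carrier A\<rbrakk> \<Longrightarrow> f (k \<odot>\<^bsub>A\<^esub> x) = k \<odot>\<^bsub>C\<^esub> f x"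
  shows "alg_hom K A C f"
  using assms unfolding alg_hom_def by auto

lemma
  assumes "alg_hom K A C f"
  shows alg_hom_closed: "x \<in> carrier A \<Longrightarrow> f x \<in> carrier C"
    and alg_hom_add: "\<lbrakk>x \<in> carrier A; y \<in> carrier A\<rbrakk> \<Longrightarrow> f (x \<oplus>\<^bsub>A\<^esub> y) = f x \<oplus>\<^bsub>C\<^esub> f y"
    and alg_hom_mult: "\<lbrakk>x \<in> carrier A; y \<in> carrier A\<rbrakk> \<Longrightarrow> f (x \<otimes>\<^bsub>A\<^esub> y) = f x \<otimes>\<^bsub>C\<^esub> f y"
    and alg_hom_smult: "\<lbrakk>k \<in> carrier K; x \<in> carrier A\<rbrakk> \<Longrightarrow> f (k \<odot>\<^bsub>A\<^esub> x) = k \<odot>\<^bsub>C\<^esub> f x"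
  using assms unfolding alg_hom_def by auto

lemma alg_hom_comp: "\<lbrakk>alg_hom K A C f; alg_hom K C D g\<rbrakk> \<Longrightarrow> alg_hom K A D (g \<circ> f)"
  unfolding alg_hom_def by (auto simp: Pi_iff)

lemma alg_hom_zero:
  assumes "abelian_group A" "abelian_group C" "alg_hom K A C f"
  shows "f \<zero>\<^bsub>A\<^esub> = \<zero>\<^bsub>C\<^esub>"
proof -
  interpret A: abelian_group A by fact
  interpret C: abelian_group C by fact
  have "f \<zero>\<^bsub>A\<^esub> = f \<zero>\<^bsub>A\<^esub> \<oplus>\<^bsub>C\<^esub> f \<zero>\<^bsub>A\<^esub>"
    using alg_hom_add[OF assms(3) A.zero_closed A.zero_closed] by (simp only: A.l_zero A.zero_closed)
  then show ?thesis
    using C.add.l_cancel_one'[OF alg_hom_closed[OF assms(3) A.zero_closed] alg_hom_closed[OF assms(3) A.zero_closed]]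
    by blast
qed

lemma alg_hom_a_inv:
  assumes "abelian_group A" "abelian_group C" "alg_hom K A C f" "x \<in> carrier A"
  shows "f (\<ominus>\<^bsub>A\<^esub> x) = \<ominus>\<^bsub>C\<^esub> f x"
proof -
  interpret A: abelian_group A by fact
  interpret C: abelian_group C by fact
  have "f (\<ominus>\<^bsub>A\<^esub> x) \<oplus>\<^bsub>C\<^esub> f x = f (\<ominus>\<^bsub>A\<^esub> x \<oplus>\<^bsub>A\<^esub> x)"
    using alg_hom_add[OF assms(3) A.a_inv_closed[OF assms(4)] assms(4)] by (rule sym)
  also have "\<dots> = \<zero>\<^bsub>C\<^esub>"
    using alg_hom_zero[OF assms(1-3)] assms(4) by (simp add: A.l_neg)
  finally have "f (\<ominus>\<^bsub>A\<^esub> x) \<oplus>\<^bsub>C\<^esub> f x = \<zero>\<^bsub>C\<^esub>" .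
  from C.minus_equality[OF this alg_hom_closed[OF assms(3) assms(4)]
      alg_hom_closed[OF assms(3) A.a_inv_closed[OF assms(4)]]]
  show ?thesis by (rule sym)
qed

lemma alg_hom_diff:
  assumes "abelian_group A" "abelian_group C" "alg_hom K A C f" "x \<in> carrier A" "y \<in> carrier A"
  shows "f (x \<ominus>\<^bsub>A\<^esub> y) = f x \<ominus>\<^bsub>C\<^esub> f y"
proof -
  interpret A: abelian_group A by fact
  interpret C: abelian_group C by fact
  show ?thesis
    using alg_hom_add[OF assms(3) assms(4) A.a_inv_closed[OF assms(5)]] alg_hom_a_inv[OF assms(1-3,5)]
    by (simp add: a_minus_def)
qed

lemma alg_idealI:
  assumes "I \<subseteq> carrier A" "\<zero>\<^bsub>A\<^esub> \<in> I" "\<And>x y. \<lbrakk>x \<in> I; y \<in> I\<rbrakk> \<Longrightarrow> x \<oplus>\<^bsub>A\<^esub> y \<in> I"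
    "\<And>x. x \<in> I \<Longrightarrow> \<ominus>\<^bsub>A\<^esub> x \<in> I" "\<And>k x. \<lbrakk>k \<in> carrier K; x \<in> I\<rbrakk> \<Longrightarrow> k \<odot>\<^bsub>A\<^esub> x \<in> I"
    "\<And>a x. \<lbrakk>a \<in> carrier A; x \<in> I\<rbrakk> \<Longrightarrow> a \<otimes>\<^bsub>A\<^esub> x \<in> I"
    "\<And>a x. \<lbrakk>a \<in> carrier A; x \<in> I\<rbrakk> \<Longrightarrow> x \<otimes>\<^bsub>A\<^esub> a \<in> I"
  shows "alg_ideal K A I"
  unfolding alg_ideal_def using assms by (intro conjI ballI) auto

lemma
  assumes "alg_ideal K A I"
  shows alg_ideal_subset: "I \<subseteq> carrier A"
    and alg_ideal_zero: "\<zero>\<^bsub>A\<^esub> \<in> I"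
    and alg_ideal_add: "\<lbrakk>x \<in> I; y \<in> I\<rbrakk> \<Longrightarrow> x \<oplus>\<^bsub>A\<^esub> y \<in> I"
    and alg_ideal_a_inv: "x \<in> I \<Longrightarrow> \<ominus>\<^bsub>A\<^esub> x \<in> I"
    and alg_ideal_smult: "\<lbrakk>k \<in> carrier K; x \<in> I\<rbrakk> \<Longrightarrow> k \<odot>\<^bsub>A\<^esub> x \<in> I"
    and alg_ideal_mult_left: "\<lbrakk>a \<in> carrier A; x \<in> I\<rbrakk> \<Longrightarrow> a \<otimes>\<^bsub>A\<^esub> x \<in> I"
    and alg_ideal_mult_right: "\<lbrakk>a \<in> carrier A; x \<in> I\<rbrakk> \<Longrightarrow> x \<otimes>\<^bsub>A\<^esub> a \<in> I"
  using assms unfolding alg_ideal_def by auto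

lemma (in kalgebra) abelian_group: "abelian_group A"
  using kalgebra_axioms by (simp add: kalgebra_def module_def)

lemma alg_ideal_vimage:
  assumes "kalgebra K A" "kalgebra K C" "alg_hom K A C f" "alg_ideal K C J"
  shows "alg_ideal K A {x \<in> carrier A. f x \<in> J}"
proof -
  interpret A: kalgebra K A by fact
  interpret C: kalgebra K C by fact
  note f = alg_hom_closed[OF assms(3)] alg_hom_add[OF assms(3)] alg_hom_smult[OF assms(3)]
    alg_hom_mult[OF assms(3)] alg_hom_zero[OF A.abelian_group C.abelian_group assms(3)]
    alg_hom_a_inv[OF A.abelian_group C.abelian_group assms(3)]
  show ?thesis
  proof (rule alg_idealI)
    show "\<zero>\<^bsub>A\<^esub> \<in> {x \<in> carrier A. f x \<in> J}"
      using f alg_ideal_zero[OF assms(4)] by simp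
  qed (use f alg_ideal_add[OF assms(4)] alg_ideal_a_inv[OF assms(4)] alg_ideal_smult[OF assms(4)]
      alg_ideal_mult_left[OF assms(4)] alg_ideal_mult_right[OF assms(4)] in auto)
qed

definition alg_ideal_span :: "('k,'e) ring_scheme \<Rightarrow> ('k,'a,'m) module_scheme \<Rightarrow> 'a set \<Rightarrow> 'a set" where
  "alg_ideal_span K A S = \<Inter> {J. alg_ideal K A J \<and> S \<subseteq> J}"

lemma alg_ideal_span_superset: "S \<subseteq> alg_ideal_span K A S"
  unfolding alg_ideal_span_def by blast

lemma alg_ideal_span_least: "\<lbrakk>alg_ideal K A J; S \<subseteq> J\<rbrakk> \<Longrightarrow> alg_ideal_span K A S \<subseteq> J"
  unfolding alg_ideal_span_def by blast

lemma fg_ideal_iff_span: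
  "fg_ideal K A I \<longleftrightarrow> alg_ideal K A I \<and> (\<exists>S. finite S \<and> S \<subseteq> carrier A \<and> I = alg_ideal_span K A S)"
  unfolding fg_ideal_def alg_ideal_span_def ..

context kalgebra begin

lemma alg_ideal_carrier: "alg_ideal K A (carrier A)"
  by (rule alg_idealI) auto

lemma alg_ideal_trivial: "alg_ideal K A {\<zero>\<^bsub>A\<^esub>}"
  by (rule alg_idealI) auto

lemma alg_ideal_span:
  assumes "S \<subseteq> carrier A"
  shows "alg_ideal K A (alg_ideal_span K A S)"
proof -
  let ?F = "{J. alg_ideal K A J \<and> S \<subseteq> J}"
  have "carrier A \<in> ?F" using assms alg_ideal_carrier by simp
  then show ?thesis
    unfolding alg_ideal_span_def
    by (intro alg_idealI) (auto intro: alg_ideal_zero alg_ideal_add alg_ideal_a_inv alg_ideal_smult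
        alg_ideal_mult_left alg_ideal_mult_right)
qed

lemma fg_ideal_span: "\<lbrakk>finite S; S \<subseteq> carrier A\<rbrakk> \<Longrightarrow> fg_ideal K A (alg_ideal_span K A S)"
  using alg_ideal_span fg_ideal_iff_span by blast

end

lemma alg_hom_kernel_ideal:
  assumes "kalgebra K A" "kalgebra K C" "alg_hom K A C f"
  shows "alg_ideal K A {x \<in> carrier A. f x = \<zero>\<^bsub>C\<^esub>}"
  using alg_ideal_vimage[OF assms kalgebra.alg_ideal_trivial[OF assms(2)]] by simp

section \<open>Quotient algebras\<close>

context kalgebra begin

lemma alg_coset_eq_iff:
  assumes I: "alg_ideal K A I" and x: "x \<in> carrier A" and y: "y \<in> carrier A"
  shows "alg_coset A I x = alg_coset A I y \<longleftrightarrow> x \<ominus>\<^bsub>A\<^esub> y \<in> I"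
proof
  assume "alg_coset A I x = alg_coset A I y"
  moreover have "x \<in> alg_coset A I x"
    unfolding alg_coset_def using x alg_ideal_zero[OF I] by force
  ultimately obtain i where i: "i \<in> I" "x = y \<oplus>\<^bsub>A\<^esub> i"
    unfolding alg_coset_def by auto
  moreover have "i \<in> carrier A" using i alg_ideal_subset[OF I] by blast
  ultimately show "x \<ominus>\<^bsub>A\<^esub> y \<in> I"
    using y by (simp add: add_diff_cancel)
next
  have shift: "alg_coset A I x \<subseteq> alg_coset A I y" if "x \<ominus>\<^bsub>A\<^esub> y \<in> I" "x \<in> carrier A" "y \<in> carrier A" for x y
  proof
    fix z assume "z \<in> alg_coset A I x"
    then obtain i where i: "i \<in> I" "z = x \<oplus>\<^bsub>A\<^esub> i" unfolding alg_coset_def by auto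
    have "z = y \<oplus>\<^bsub>A\<^esub> ((x \<ominus>\<^bsub>A\<^esub> y) \<oplus>\<^bsub>A\<^esub> i)"
      using i that alg_ideal_subset[OF I] by (auto simp: a_assoc[symmetric] add_diff_cancel_left)
    moreover have "(x \<ominus>\<^bsub>A\<^esub> y) \<oplus>\<^bsub>A\<^esub> i \<in> I" using that i alg_ideal_add[OF I] by blast
    ultimately show "z \<in> alg_coset A I y" unfolding alg_coset_def by blast
  qed
  assume d: "x \<ominus>\<^bsub>A\<^esub> y \<in> I"
  have "y \<ominus>\<^bsub>A\<^esub> x \<in> I"
    using alg_ideal_a_inv[OF I d] x y by (simp add: a_minus_def minus_add a_comm)
  then show "alg_coset A I x = alg_coset A I y" using shift d x y by blast
qed

lemma
  assumes I: "alg_ideal K A I" and x: "x \<in> carrier A"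
  shows qrep_alg_coset_closed: "qrep (alg_coset A I x) \<in> carrier A"
    and qrep_alg_coset_diff: "qrep (alg_coset A I x) \<ominus>\<^bsub>A\<^esub> x \<in> I"
proof -
  have "x \<in> alg_coset A I x"
    unfolding alg_coset_def using x alg_ideal_zero[OF I] by force
  then have "qrep (alg_coset A I x) \<in> alg_coset A I x"
    unfolding qrep_def by (rule someI)
  then obtain i where i: "i \<in> I" "qrep (alg_coset A I x) = x \<oplus>\<^bsub>A\<^esub> i"
    unfolding alg_coset_def by auto
  moreover have "i \<in> carrier A" using i alg_ideal_subset[OF I] by blast
  ultimately show "qrep (alg_coset A I x) \<in> carrier A" "qrep (alg_coset A I x) \<ominus>\<^bsub>A\<^esub> x \<in> I"
    using x by (simp_all add: add_diff_cancel)
qed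

lemma quot_alg_carrier: "carrier (quot_alg K A I) = alg_coset A I ` carrier A"
  unfolding quot_alg_def by simp

lemma quot_alg_zero:
  assumes "alg_ideal K A I"
  shows "\<zero>\<^bsub>quot_alg K A I\<^esub> = alg_coset A I \<zero>\<^bsub>A\<^esub>"
proof -
  have "\<zero>\<^bsub>A\<^esub> \<oplus>\<^bsub>A\<^esub> i = i" if "i \<in> I" for i
    using that alg_ideal_subset[OF assms] by auto
  then show ?thesis unfolding quot_alg_def alg_coset_def by force
qed

lemma alg_coset_eq_zero_iff:
  "\<lbrakk>alg_ideal K A I; x \<in> carrier A\<rbrakk> \<Longrightarrow> alg_coset A I x = \<zero>\<^bsub>quot_alg K A I\<^esub> \<longleftrightarrow> x \<in> I"
  by (simp add: quot_alg_zero alg_coset_eq_iff diff_zero)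

lemma quot_alg_add:
  assumes I: "alg_ideal K A I" and x: "x \<in> carrier A" and y: "y \<in> carrier A"
  shows "alg_coset A I x \<oplus>\<^bsub>quot_alg K A I\<^esub> alg_coset A I y = alg_coset A I (x \<oplus>\<^bsub>A\<^esub> y)"
proof -
  let ?x = "qrep (alg_coset A I x)" and ?y = "qrep (alg_coset A I y)"
  note reps = qrep_alg_coset_closed[OF I x] qrep_alg_coset_closed[OF I y]
  have "(?x \<oplus>\<^bsub>A\<^esub> ?y) \<ominus>\<^bsub>A\<^esub> (x \<oplus>\<^bsub>A\<^esub> y) = (?x \<ominus>\<^bsub>A\<^esub> x) \<oplus>\<^bsub>A\<^esub> (?y \<ominus>\<^bsub>A\<^esub> y)"
    using reps x y by (rule add_diff_add)
  also have "\<dots> \<in> I"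
    using qrep_alg_coset_diff[OF I x] qrep_alg_coset_diff[OF I y] by (rule alg_ideal_add[OF I])
  finally show ?thesis
    unfolding quot_alg_def using reps x y by (simp add: alg_coset_eq_iff[OF I])
qed

lemma quot_alg_mult:
  assumes I: "alg_ideal K A I" and x: "x \<in> carrier A" and y: "y \<in> carrier A"
  shows "alg_coset A I x \<otimes>\<^bsub>quot_alg K A I\<^esub> alg_coset A I y = alg_coset A I (x \<otimes>\<^bsub>A\<^esub> y)"
proof -
  let ?x = "qrep (alg_coset A I x)" and ?y = "qrep (alg_coset A I y)"
  note reps = qrep_alg_coset_closed[OF I x] qrep_alg_coset_closed[OF I y]
  have "(?x \<otimes>\<^bsub>A\<^esub> ?y) \<ominus>\<^bsub>A\<^esub> (x \<otimes>\<^bsub>A\<^esub> y) =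
      (?x \<otimes>\<^bsub>A\<^esub> ?y \<ominus>\<^bsub>A\<^esub> x \<otimes>\<^bsub>A\<^esub> ?y) \<oplus>\<^bsub>A\<^esub> (x \<otimes>\<^bsub>A\<^esub> ?y \<ominus>\<^bsub>A\<^esub> x \<otimes>\<^bsub>A\<^esub> y)"
    using reps x y by (intro diff_add_diff) auto
  also have "\<dots> = (?x \<ominus>\<^bsub>A\<^esub> x) \<otimes>\<^bsub>A\<^esub> ?y \<oplus>\<^bsub>A\<^esub> x \<otimes>\<^bsub>A\<^esub> (?y \<ominus>\<^bsub>A\<^esub> y)"
    using reps x y by (simp add: l_diff_distr r_diff_distr)
  also have "\<dots> \<in> I"
    using qrep_alg_coset_diff[OF I x] qrep_alg_coset_diff[OF I y] reps x
    by (intro alg_ideal_add[OF I] alg_ideal_mult_left[OF I] alg_ideal_mult_right[OF I])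
  finally show ?thesis
    unfolding quot_alg_def using reps x y by (simp add: alg_coset_eq_iff[OF I])
qed

lemma quot_alg_smult:
  assumes I: "alg_ideal K A I" and x: "x \<in> carrier A" and k: "k \<in> carrier K"
  shows "k \<odot>\<^bsub>quot_alg K A I\<^esub> alg_coset A I x = alg_coset A I (k \<odot>\<^bsub>A\<^esub> x)"
proof -
  let ?x = "qrep (alg_coset A I x)"
  note rep = qrep_alg_coset_closed[OF I x]
  have "(k \<odot>\<^bsub>A\<^esub> ?x) \<ominus>\<^bsub>A\<^esub> (k \<odot>\<^bsub>A\<^esub> x) = k \<odot>\<^bsub>A\<^esub> (?x \<ominus>\<^bsub>A\<^esub> x)"
    using rep x k by (simp add: a_minus_def smult_r_distr smult_r_minus)
  also have "\<dots> \<in> I" using k qrep_alg_coset_diff[OF I x] by (rule alg_ideal_smult[OF I])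
  finally show ?thesis
    unfolding quot_alg_def using rep x k by (simp add: alg_coset_eq_iff[OF I])
qed

lemma kalgebra_quot_alg:
  assumes I: "alg_ideal K A I"
  shows "kalgebra K (quot_alg K A I)"
proof -
  note quot_simps = quot_alg_carrier quot_alg_add[OF I] quot_alg_mult[OF I] quot_alg_smult[OF I]
    quot_alg_zero[OF I]
  have "abelian_group (quot_alg K A I)"
  proof (rule abelian_groupI)
    fix X assume "X \<in> carrier (quot_alg K A I)"
    then obtain x where x: "x \<in> carrier A" "X = alg_coset A I x" by (auto simp: quot_alg_carrier)
    show "\<exists>Y\<in>carrier (quot_alg K A I). Y \<oplus>\<^bsub>quot_alg K A I\<^esub> X = \<zero>\<^bsub>quot_alg K A I\<^esub>"
      using x by (intro bexI[of _ "alg_coset A I (\<ominus>\<^bsub>A\<^esub> x)"]) (auto simp: quot_simps l_neg)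
  qed (auto simp: quot_simps a_ac)
  moreover have "module K (quot_alg K A I)"
    by (rule moduleI[OF R.is_cring \<open>abelian_group (quot_alg K A I)\<close>])
      (auto simp: quot_simps smult_l_distr smult_r_distr smult_assoc1)
  ultimately show ?thesis
    by (intro kalgebra.intro kalgebra_axioms.intro)
      (auto simp: quot_simps m_assoc r_distr l_distr smult_mult_left smult_mult_right)
qed

lemma alg_hom_alg_coset: "alg_ideal K A I \<Longrightarrow> alg_hom K A (quot_alg K A I) (alg_coset A I)"
  by (rule alg_homI) (auto simp: quot_alg_carrier quot_alg_add quot_alg_mult quot_alg_smult)

lemma kalgebra_ideal:
  assumes I: "alg_ideal K A I"
  shows "kalgebra K (A\<lparr>carrier := I\<rparr>)"
proof -
  have "submodule I K A"
    by (rule submoduleI) (use alg_ideal_subset[OF I] alg_ideal_zero[OF I] alg_ideal_add[OF I]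
        alg_ideal_a_inv[OF I] alg_ideal_smult[OF I] in auto)
  then have "module K (A\<lparr>carrier := I\<rparr>)"
    by (rule submodule.submodule_is_module) (rule module_axioms)
  moreover have "x \<in> carrier A" if "x \<in> I" for x
    using that alg_ideal_subset[OF I] by blast
  ultimately show ?thesis
    using alg_ideal_mult_left[OF I]
    by (intro kalgebra.intro kalgebra_axioms.intro)
      (simp_all add: m_assoc r_distr l_distr smult_mult_left smult_mult_right)
qed

lemma quot_alg_elem:
  assumes "X \<in> carrier (quot_alg K A I)"
  obtains x where "x \<in> carrier A" "X = alg_coset A I x"
  using assms by (auto simp: quot_alg_carrier)

end

section \<open>Free algebras\<close>

definition word_splits :: "'x list \<Rightarrow> ('x list \<times> 'x list) set" where
  "word_splits w = {(u, v). u @ v = w \<and> u \<noteq> [] \<and> v \<noteq> []}"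

lemma finite_word_splits [simp]: "finite (word_splits w)"
proof -
  have "word_splits w \<subseteq> (\<lambda>n. (take n w, drop n w)) ` {0..length w}"
  proof
    fix p assume "p \<in> word_splits w"
    then obtain u v where "p = (u, v)" "u @ v = w" unfolding word_splits_def by auto
    then show "p \<in> (\<lambda>n. (take n w, drop n w)) ` {0..length w}"
      by (intro image_eqI[of _ _ "length u"]) auto
  qed
  then show ?thesis by (rule finite_subset) simp
qed

definition free_monom :: "('k,'e) ring_scheme \<Rightarrow> 'x \<Rightarrow> 'k \<Rightarrow> 'x \<Rightarrow> 'k" where
  "free_monom R w k = (\<lambda>t. if t = w then k else \<zero>\<^bsub>R\<^esub>)"

abbreviation free_gen :: "('k,'e) ring_scheme \<Rightarrow> 'x \<Rightarrow> 'x list \<Rightarrow> 'k" where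
  "free_gen R v \<equiv> free_monom R [v] \<one>\<^bsub>R\<^esub>"

context cring begin

lemma free_alg_carrier_iff: "f \<in> carrier (free_alg R V) \<longleftrightarrow>
    (\<forall>w. f w \<in> carrier R) \<and> finite {w. f w \<noteq> \<zero>} \<and> (\<forall>w. f w \<noteq> \<zero> \<longrightarrow> w \<noteq> [] \<and> set w \<subseteq> V)"
  by (simp add: free_alg_def)

lemma free_alg_zero: "\<zero>\<^bsub>free_alg R V\<^esub> = (\<lambda>w. \<zero>)"
  and free_alg_add: "f \<oplus>\<^bsub>free_alg R V\<^esub> g = (\<lambda>w. f w \<oplus> g w)"
  and free_alg_smult: "k \<odot>\<^bsub>free_alg R V\<^esub> f = (\<lambda>w. k \<otimes> f w)"
  and free_alg_mult: "f \<otimes>\<^bsub>free_alg R V\<^esub> g = (\<lambda>w. \<Oplus>p\<in>word_splits w. f (fst p) \<otimes> g (snd p))"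
  by (simp_all add: free_alg_def word_splits_def split_def)

lemma
  assumes "f \<in> carrier (free_alg R V)"
  shows free_alg_coeff_closed: "f w \<in> carrier R"
    and finite_free_alg_support: "finite {w. f w \<noteq> \<zero>}"
    and free_alg_support: "f w \<noteq> \<zero> \<Longrightarrow> w \<noteq> [] \<and> set w \<subseteq> V"
  using assms by (simp_all add: free_alg_carrier_iff)

lemma free_alg_zero_closed: "\<zero>\<^bsub>free_alg R V\<^esub> \<in> carrier (free_alg R V)"
  by (simp add: free_alg_carrier_iff free_alg_zero)

lemma free_alg_pointwise_closed:
  assumes "f \<in> carrier (free_alg R V)" and "\<And>w. h w \<in> carrier R" and "\<And>w. f w = \<zero> \<Longrightarrow> h w = \<zero>"
  shows "h \<in> carrier (free_alg R V)"
proof -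
  have "{w. h w \<noteq> \<zero>} \<subseteq> {w. f w \<noteq> \<zero>}" using assms(3) by blast
  then have "finite {w. h w \<noteq> \<zero>}" using finite_free_alg_support[OF assms(1)] by (rule finite_subset)
  moreover have "w \<noteq> [] \<and> set w \<subseteq> V" if "h w \<noteq> \<zero>" for w
    using that assms(3) free_alg_support[OF assms(1)] by blast
  ultimately show ?thesis using assms(2) by (simp add: free_alg_carrier_iff)
qed

lemma free_alg_add_closed:
  assumes f: "f \<in> carrier (free_alg R V)" and g: "g \<in> carrier (free_alg R V)"
  shows "f \<oplus>\<^bsub>free_alg R V\<^esub> g \<in> carrier (free_alg R V)"
proof -
  have "{w. f w \<oplus> g w \<noteq> \<zero>} \<subseteq> {w. f w \<noteq> \<zero>} \<union> {w. g w \<noteq> \<zero>}"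
    using f g by (auto simp: free_alg_coeff_closed)
  moreover have "finite ({w. f w \<noteq> \<zero>} \<union> {w. g w \<noteq> \<zero>})"
    using finite_free_alg_support[OF f] finite_free_alg_support[OF g] by simp
  ultimately have "finite {w. f w \<oplus> g w \<noteq> \<zero>}" by (rule finite_subset)
  moreover have "w \<noteq> [] \<and> set w \<subseteq> V" if "f w \<oplus> g w \<noteq> \<zero>" for w
    using that \<open>{w. f w \<oplus> g w \<noteq> \<zero>} \<subseteq> _\<close> free_alg_support[OF f] free_alg_support[OF g] by blast
  ultimately show ?thesis
    using f g by (simp add: free_alg_carrier_iff free_alg_add free_alg_coeff_closed)
qed

lemma free_alg_smult_closed:
  "\<lbrakk>k \<in> carrier R; f \<in> carrier (free_alg R V)\<rbrakk> \<Longrightarrow> k \<odot>\<^bsub>free_alg R V\<^esub> f \<in> carrier (free_alg R V)"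
  by (rule free_alg_pointwise_closed[where f = f]) (auto simp: free_alg_smult free_alg_coeff_closed)

lemma free_alg_a_inv_closed:
  "f \<in> carrier (free_alg R V) \<Longrightarrow> (\<lambda>w. \<ominus> f w) \<in> carrier (free_alg R V)"
  by (rule free_alg_pointwise_closed[where f = f]) (auto simp: free_alg_coeff_closed)

lemma free_alg_mult_closed:
  assumes f: "f \<in> carrier (free_alg R V)" and g: "g \<in> carrier (free_alg R V)"
  shows "f \<otimes>\<^bsub>free_alg R V\<^esub> g \<in> carrier (free_alg R V)"
proof -
  let ?h = "f \<otimes>\<^bsub>free_alg R V\<^esub> g"
  have split: "\<exists>u v. w = u @ v \<and> f u \<noteq> \<zero> \<and> g v \<noteq> \<zero>" if "?h w \<noteq> \<zero>" for w
  proof (rule ccontr)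
    assume none: "\<not> ?thesis"
    have "f (fst p) \<otimes> g (snd p) = \<zero>" if "p \<in> word_splits w" for p
    proof -
      from that have "w = fst p @ snd p" by (auto simp: word_splits_def)
      then have "f (fst p) = \<zero> \<or> g (snd p) = \<zero>" using none by blast
      then show ?thesis using f g by (auto simp: free_alg_coeff_closed)
    qed
    then have "?h w = \<zero>" by (simp add: free_alg_mult add.finprod_one_eqI)
    then show False using \<open>?h w \<noteq> \<zero>\<close> by contradiction
  qed
  have "{w. ?h w \<noteq> \<zero>} \<subseteq> (\<lambda>(u, v). u @ v) ` ({w. f w \<noteq> \<zero>} \<times> {w. g w \<noteq> \<zero>})"
    using split by fastforce
  moreover have "finite ((\<lambda>(u, v). u @ v) ` ({w. f w \<noteq> \<zero>} \<times> {w. g w \<noteq> \<zero>}))"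
    using finite_free_alg_support[OF f] finite_free_alg_support[OF g] by simp
  ultimately have "finite {w. ?h w \<noteq> \<zero>}" by (rule finite_subset)
  moreover have "w \<noteq> [] \<and> set w \<subseteq> V" if "?h w \<noteq> \<zero>" for w
    using split[OF that] free_alg_support[OF f] free_alg_support[OF g] by fastforce
  moreover have "?h w \<in> carrier R" for w
    using f g by (auto simp: free_alg_mult free_alg_coeff_closed intro!: finsum_closed)
  ultimately show ?thesis by (simp add: free_alg_carrier_iff)
qed

lemma abelian_group_free_alg: "abelian_group (free_alg R V)"
proof (rule abelian_groupI)
  fix x assume x: "x \<in> carrier (free_alg R V)"
  show "\<exists>y\<in>carrier (free_alg R V). y \<oplus>\<^bsub>free_alg R V\<^esub> x = \<zero>\<^bsub>free_alg R V\<^esub>"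
    using x free_alg_a_inv_closed[OF x]
    by (intro bexI[of _ "\<lambda>w. \<ominus> x w"]) (auto simp: free_alg_add free_alg_zero free_alg_coeff_closed l_neg)
qed (auto simp: free_alg_add free_alg_zero free_alg_coeff_closed a_ac
    intro: free_alg_add_closed[unfolded free_alg_add] free_alg_zero_closed[unfolded free_alg_zero])

lemma module_free_alg: "module R (free_alg R V)"
  by (rule moduleI[OF is_cring abelian_group_free_alg])
    (auto simp: free_alg_add free_alg_smult free_alg_coeff_closed l_distr r_distr m_assoc
      intro: free_alg_smult_closed[unfolded free_alg_smult])

lemma free_alg_r_distr:
  "\<lbrakk>f \<in> carrier (free_alg R V); g \<in> carrier (free_alg R V); h \<in> carrier (free_alg R V)\<rbrakk> \<Longrightarrow>
    f \<otimes>\<^bsub>free_alg R V\<^esub> (g \<oplus>\<^bsub>free_alg R V\<^esub> h) =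
    f \<otimes>\<^bsub>free_alg R V\<^esub> g \<oplus>\<^bsub>free_alg R V\<^esub> f \<otimes>\<^bsub>free_alg R V\<^esub> h"
  by (auto simp: free_alg_mult free_alg_add free_alg_coeff_closed r_distr Pi_def
      intro!: ext finsum_addf[symmetric])

lemma free_alg_l_distr:
  "\<lbrakk>f \<in> carrier (free_alg R V); g \<in> carrier (free_alg R V); h \<in> carrier (free_alg R V)\<rbrakk> \<Longrightarrow>
    (f \<oplus>\<^bsub>free_alg R V\<^esub> g) \<otimes>\<^bsub>free_alg R V\<^esub> h =
    f \<otimes>\<^bsub>free_alg R V\<^esub> h \<oplus>\<^bsub>free_alg R V\<^esub> g \<otimes>\<^bsub>free_alg R V\<^esub> h"
  by (auto simp: free_alg_mult free_alg_add free_alg_coeff_closed l_distr Pi_def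
      intro!: ext finsum_addf[symmetric])

lemma free_alg_smult_mult_left:
  "\<lbrakk>k \<in> carrier R; f \<in> carrier (free_alg R V); g \<in> carrier (free_alg R V)\<rbrakk> \<Longrightarrow>
    (k \<odot>\<^bsub>free_alg R V\<^esub> f) \<otimes>\<^bsub>free_alg R V\<^esub> g = k \<odot>\<^bsub>free_alg R V\<^esub> (f \<otimes>\<^bsub>free_alg R V\<^esub> g)"
  by (auto simp: free_alg_mult free_alg_smult free_alg_coeff_closed m_assoc Pi_def
      intro!: ext finsum_rdistr[symmetric])

lemma free_alg_smult_mult_right:
  "\<lbrakk>k \<in> carrier R; f \<in> carrier (free_alg R V); g \<in> carrier (free_alg R V)\<rbrakk> \<Longrightarrow>
    f \<otimes>\<^bsub>free_alg R V\<^esub> (k \<odot>\<^bsub>free_alg R V\<^esub> g) = k \<odot>\<^bsub>free_alg R V\<^esub> (f \<otimes>\<^bsub>free_alg R V\<^esub> g)"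
  by (auto simp: free_alg_mult free_alg_smult free_alg_coeff_closed m_lcomm Pi_def
      intro!: ext finsum_rdistr[symmetric])

lemma free_alg_l_null: "g \<in> carrier (free_alg R V) \<Longrightarrow>
    \<zero>\<^bsub>free_alg R V\<^esub> \<otimes>\<^bsub>free_alg R V\<^esub> g = \<zero>\<^bsub>free_alg R V\<^esub>"
  by (auto simp: free_alg_mult free_alg_zero free_alg_coeff_closed intro!: ext add.finprod_one_eqI)

lemma free_alg_r_null: "f \<in> carrier (free_alg R V) \<Longrightarrow>
    f \<otimes>\<^bsub>free_alg R V\<^esub> \<zero>\<^bsub>free_alg R V\<^esub> = \<zero>\<^bsub>free_alg R V\<^esub>"
  by (auto simp: free_alg_mult free_alg_zero free_alg_coeff_closed intro!: ext add.finprod_one_eqI)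

lemma free_monom_closed:
  "\<lbrakk>w \<noteq> []; set w \<subseteq> V; k \<in> carrier R\<rbrakk> \<Longrightarrow> free_monom R w k \<in> carrier (free_alg R V)"
  by (auto simp: free_alg_carrier_iff free_monom_def)

lemma free_monom_mult:
  assumes "u \<noteq> []" "v \<noteq> []" "a \<in> carrier R" "b \<in> carrier R"
  shows "free_monom R u a \<otimes>\<^bsub>free_alg R V\<^esub> free_monom R v b = free_monom R (u @ v) (a \<otimes> b)"
proof
  fix w
  have "(\<Oplus>p\<in>word_splits w. free_monom R u a (fst p) \<otimes> free_monom R v b (snd p)) =
      (\<Oplus>p\<in>word_splits w. if (u, v) = p then a \<otimes> b else \<zero>)"
    by (rule finsum_cong') (auto simp: free_monom_def assms)
  also have "\<dots> = free_monom R (u @ v) (a \<otimes> b) w"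
  proof (cases "w = u @ v")
    case True
    then have "(u, v) \<in> word_splits w" using assms by (simp add: word_splits_def)
    then show ?thesis
      using add.finprod_singleton[of "(u, v)" "word_splits w" "\<lambda>_. a \<otimes> b"] True assms
      by (simp add: free_monom_def)
  next
    case False
    then show ?thesis
      by (auto simp: free_monom_def word_splits_def intro!: add.finprod_one_eqI)
  qed
  finally show "(free_monom R u a \<otimes>\<^bsub>free_alg R V\<^esub> free_monom R v b) w = free_monom R (u @ v) (a \<otimes> b) w"
    by (simp add: free_alg_mult)
qed

lemma free_alg_monom_induct [consumes 1, case_names zero add_monom]:
  assumes f: "f \<in> carrier (free_alg R V)"
    and zero: "P \<zero>\<^bsub>free_alg R V\<^esub>"
    and add_monom: "\<And>g w k. \<lbrakk>g \<in> carrier (free_alg R V); w \<noteq> []; set w \<subseteq> V; k \<in> carrier R; P g\<rbrakk> \<Longrightarrow>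
      P (g \<oplus>\<^bsub>free_alg R V\<^esub> free_monom R w k)"
  shows "P f"
proof -
  have "P f" if "f \<in> carrier (free_alg R V)" "card {w. f w \<noteq> \<zero>} = n" for f n
    using that
  proof (induction n arbitrary: f)
    case 0
    then have "f = \<zero>\<^bsub>free_alg R V\<^esub>"
      using finite_free_alg_support[OF 0(1)] by (auto simp: free_alg_zero)
    then show ?case using zero by simp
  next
    case (Suc n)
    then obtain w where w: "f w \<noteq> \<zero>" by fastforce
    define g where "g = f(w := \<zero>)"
    have g: "g \<in> carrier (free_alg R V)"
      using Suc.prems(1) by (rule free_alg_pointwise_closed) (auto simp: g_def free_alg_coeff_closed[OF Suc.prems(1)])
    have "{t. g t \<noteq> \<zero>} = {t. f t \<noteq> \<zero>} - {w}" by (auto simp: g_def)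
    then have "card {t. g t \<noteq> \<zero>} = n"
      using Suc.prems w finite_free_alg_support[OF Suc.prems(1)] by simp
    then have "P (g \<oplus>\<^bsub>free_alg R V\<^esub> free_monom R w (f w))"
      using Suc.IH[OF g] free_alg_support[OF Suc.prems(1) w] free_alg_coeff_closed[OF Suc.prems(1)]
      by (intro add_monom g) auto
    moreover have "f = g \<oplus>\<^bsub>free_alg R V\<^esub> free_monom R w (f w)"
      using Suc.prems(1) by (auto simp: free_alg_add g_def free_monom_def free_alg_coeff_closed)
    ultimately show ?case by simp
  qed
  then show ?thesis using f by blast
qed

lemma free_alg_m_assoc:
  assumes f: "f \<in> carrier (free_alg R V)" and g: "g \<in> carrier (free_alg R V)"
    and h: "h \<in> carrier (free_alg R V)"
  shows "(f \<otimes>\<^bsub>free_alg R V\<^esub> g) \<otimes>\<^bsub>free_alg R V\<^esub> h = f \<otimes>\<^bsub>free_alg R V\<^esub> (g \<otimes>\<^bsub>free_alg R V\<^esub> h)"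
proof -
  let ?F = "free_alg R V"
  note closed = free_alg_mult_closed free_monom_closed free_alg_add_closed
  have monom3: "(free_monom R u a \<otimes>\<^bsub>?F\<^esub> free_monom R v b) \<otimes>\<^bsub>?F\<^esub> h =
      free_monom R u a \<otimes>\<^bsub>?F\<^esub> (free_monom R v b \<otimes>\<^bsub>?F\<^esub> h)"
    if "u \<noteq> []" "set u \<subseteq> V" "v \<noteq> []" "set v \<subseteq> V" "a \<in> carrier R" "b \<in> carrier R"
      "h \<in> carrier ?F" for u v a b h
    using that(7)
  proof (induction h rule: free_alg_monom_induct)
    case zero
    then show ?case using that by (simp add: free_alg_r_null closed)
  next
    case (add_monom h w k)
    then show ?case
      using that by (simp add: free_alg_r_distr closed free_monom_mult m_assoc)
  qed
  have monom2: "(free_monom R u a \<otimes>\<^bsub>?F\<^esub> g) \<otimes>\<^bsub>?F\<^esub> h = free_monom R u a \<otimes>\<^bsub>?F\<^esub> (g \<otimes>\<^bsub>?F\<^esub> h)"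
    if "u \<noteq> []" "set u \<subseteq> V" "a \<in> carrier R" "g \<in> carrier ?F" "h \<in> carrier ?F" for u a g h
    using that(4)
  proof (induction g rule: free_alg_monom_induct)
    case zero
    then show ?case using that by (simp add: free_alg_r_null free_alg_l_null closed)
  next
    case (add_monom g w k)
    then show ?case
      using that by (simp add: free_alg_r_distr free_alg_l_distr closed monom3)
  qed
  show ?thesis
    using f
  proof (induction f rule: free_alg_monom_induct)
    case zero
    then show ?case using g h by (simp add: free_alg_l_null closed)
  next
    case (add_monom f w k)
    then show ?case using g h by (simp add: free_alg_l_distr closed monom2)
  qed
qed

lemma kalgebra_free_alg: "kalgebra R (free_alg R V)"
  by (intro kalgebra.intro kalgebra_axioms.intro module_free_alg)
    (simp_all add: free_alg_mult_closed free_alg_m_assoc free_alg_r_distr free_alg_l_distr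
      free_alg_smult_mult_left free_alg_smult_mult_right)

lemma free_monom_eq_smult: "k \<in> carrier R \<Longrightarrow> free_monom R w k = k \<odot>\<^bsub>free_alg R V\<^esub> free_monom R w \<one>"
  by (auto simp: free_monom_def free_alg_smult)

lemma free_alg_gen_induct [consumes 1, case_names zero gen add mult smult]:
  assumes f: "f \<in> carrier (free_alg R V)"
    and zero: "P \<zero>\<^bsub>free_alg R V\<^esub>"
    and gen: "\<And>v. v \<in> V \<Longrightarrow> P (free_gen R v)"
    and add: "\<And>a b. \<lbrakk>a \<in> carrier (free_alg R V); b \<in> carrier (free_alg R V); P a; P b\<rbrakk> \<Longrightarrow>
      P (a \<oplus>\<^bsub>free_alg R V\<^esub> b)"
    and mult: "\<And>a b. \<lbrakk>a \<in> carrier (free_alg R V); b \<in> carrier (free_alg R V); P a; P b\<rbrakk> \<Longrightarrow>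
      P (a \<otimes>\<^bsub>free_alg R V\<^esub> b)"
    and smult: "\<And>k a. \<lbrakk>k \<in> carrier R; a \<in> carrier (free_alg R V); P a\<rbrakk> \<Longrightarrow> P (k \<odot>\<^bsub>free_alg R V\<^esub> a)"
  shows "P f"
proof -
  have word: "P (free_monom R w \<one>)" if "w \<noteq> []" "set w \<subseteq> V" for w
    using that
  proof (induction w)
    case (Cons v w)
    show ?case
    proof (cases "w = []")
      case True
      then show ?thesis using Cons.prems gen by simp
    next
      case False
      then have "free_monom R (v # w) \<one> = free_gen R v \<otimes>\<^bsub>free_alg R V\<^esub> free_monom R w \<one>"
        by (simp add: free_monom_mult)
      then show ?thesis
        using Cons False gen mult[of "free_gen R v" "free_monom R w \<one>"] by (simp add: free_monom_closed)
    qed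
  qed simp
  show ?thesis
    using f
  proof (induction f rule: free_alg_monom_induct)
    case (add_monom g w k)
    then have "P (free_monom R w k)"
      using smult[of k "free_monom R w \<one>"] word[of w] by (simp add: free_monom_closed free_monom_eq_smult[of k w V])
    then show ?case
      using add_monom add[of g "free_monom R w k"] by (simp add: free_monom_closed)
  qed (rule zero)
qed

end

section \<open>Evaluation and the universal property\<close>

fun word_eval :: "('k,'a,'m) module_scheme \<Rightarrow> ('x \<Rightarrow> 'a) \<Rightarrow> 'x list \<Rightarrow> 'a" where
  "word_eval A g [] = \<zero>\<^bsub>A\<^esub>"
| "word_eval A g [v] = g v"
| "word_eval A g (v # u # w) = g v \<otimes>\<^bsub>A\<^esub> word_eval A g (u # w)"

definition free_eval :: "('k,'e) ring_scheme \<Rightarrow> ('k,'a,'m) module_scheme \<Rightarrow> ('x \<Rightarrow> 'a) \<Rightarrow>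
    ('x list \<Rightarrow> 'k) \<Rightarrow> 'a" where
  "free_eval K A g f = (\<Oplus>\<^bsub>A\<^esub>w\<in>{w. f w \<noteq> \<zero>\<^bsub>K\<^esub>}. f w \<odot>\<^bsub>A\<^esub> word_eval A g w)"

context kalgebra begin

lemma word_eval_closed: "\<lbrakk>g \<in> V \<rightarrow> carrier A; set w \<subseteq> V\<rbrakk> \<Longrightarrow> word_eval A g w \<in> carrier A"
proof (induction w)
  case (Cons v w)
  then show ?case by (cases w) auto
qed simp

lemma smult_lcomm:
  "\<lbrakk>a \<in> carrier K; b \<in> carrier K; x \<in> carrier A\<rbrakk> \<Longrightarrow> a \<odot>\<^bsub>A\<^esub> (b \<odot>\<^bsub>A\<^esub> x) = b \<odot>\<^bsub>A\<^esub> (a \<odot>\<^bsub>A\<^esub> x)"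
  by (metis smult_assoc1 R.m_comm)

lemma word_eval_append:
  assumes g: "g \<in> V \<rightarrow> carrier A" and "set u \<subseteq> V" "set v \<subseteq> V" "u \<noteq> []" "v \<noteq> []"
  shows "word_eval A g (u @ v) = word_eval A g u \<otimes>\<^bsub>A\<^esub> word_eval A g v"
  using assms(2-4)
proof (induction u)
  case (Cons a u)
  show ?case
  proof (cases u)
    case Nil
    then show ?thesis using \<open>v \<noteq> []\<close> by (cases v) auto
  next
    case (Cons b u')
    then have "word_eval A g ((a # u) @ v) = g a \<otimes>\<^bsub>A\<^esub> (word_eval A g u \<otimes>\<^bsub>A\<^esub> word_eval A g v)"
      using Cons.IH Cons.prems \<open>v \<noteq> []\<close> by simp
    also have "\<dots> = (g a \<otimes>\<^bsub>A\<^esub> word_eval A g u) \<otimes>\<^bsub>A\<^esub> word_eval A g v"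
      using Cons.prems assms(3) g by (simp add: m_assoc word_eval_closed Pi_iff)
    finally show ?thesis using Cons by simp
  qed
qed simp

lemma
  assumes g: "g \<in> V \<rightarrow> carrier A" and f: "f \<in> carrier (free_alg K V)"
  shows free_eval_closed: "free_eval K A g f \<in> carrier A"
    and free_eval_eq_finsum:
      "\<lbrakk>finite W; {w. f w \<noteq> \<zero>\<^bsub>K\<^esub>} \<subseteq> W; \<forall>w\<in>W. set w \<subseteq> V\<rbrakk> \<Longrightarrow>
        free_eval K A g f = (\<Oplus>\<^bsub>A\<^esub>w\<in>W. f w \<odot>\<^bsub>A\<^esub> word_eval A g w)"
proof -
  have summand: "f w \<odot>\<^bsub>A\<^esub> word_eval A g w \<in> carrier A" if "set w \<subseteq> V" for w
    using that g f by (simp add: word_eval_closed R.free_alg_coeff_closed)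
  then show "free_eval K A g f \<in> carrier A"
    using R.free_alg_support[OF f] by (auto simp: free_eval_def intro!: finsum_closed)
  show "free_eval K A g f = (\<Oplus>\<^bsub>A\<^esub>w\<in>W. f w \<odot>\<^bsub>A\<^esub> word_eval A g w)"
    if "finite W" "{w. f w \<noteq> \<zero>\<^bsub>K\<^esub>} \<subseteq> W" "\<forall>w\<in>W. set w \<subseteq> V"
    unfolding free_eval_def
    by (rule add.finprod_mono_neutral_cong_left)
      (use that summand g in \<open>auto simp: word_eval_closed\<close>)
qed

lemma free_eval_zero: "free_eval K A g \<zero>\<^bsub>free_alg K V\<^esub> = \<zero>\<^bsub>A\<^esub>"
  by (simp add: free_eval_def R.free_alg_zero)

lemma free_eval_add:
  assumes g: "g \<in> V \<rightarrow> carrier A"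
    and f: "f \<in> carrier (free_alg K V)" and h: "h \<in> carrier (free_alg K V)"
  shows "free_eval K A g (f \<oplus>\<^bsub>free_alg K V\<^esub> h) = free_eval K A g f \<oplus>\<^bsub>A\<^esub> free_eval K A g h"
proof -
  let ?W = "{w. f w \<noteq> \<zero>\<^bsub>K\<^esub>} \<union> {w. h w \<noteq> \<zero>\<^bsub>K\<^esub>}"
  have W: "finite ?W" "\<forall>w\<in>?W. set w \<subseteq> V"
    using f h by (auto simp: R.finite_free_alg_support dest: R.free_alg_support)
  have sub: "{w. (f \<oplus>\<^bsub>free_alg K V\<^esub> h) w \<noteq> \<zero>\<^bsub>K\<^esub>} \<subseteq> ?W"
    using f h by (auto simp: R.free_alg_add R.free_alg_coeff_closed)
  have "free_eval K A g (f \<oplus>\<^bsub>free_alg K V\<^esub> h) =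
      (\<Oplus>\<^bsub>A\<^esub>w\<in>?W. (f w \<oplus>\<^bsub>K\<^esub> h w) \<odot>\<^bsub>A\<^esub> word_eval A g w)"
    using free_eval_eq_finsum[OF g R.free_alg_add_closed[OF f h] W(1) sub W(2)]
    by (simp add: R.free_alg_add)
  also have "\<dots> = (\<Oplus>\<^bsub>A\<^esub>w\<in>?W. f w \<odot>\<^bsub>A\<^esub> word_eval A g w \<oplus>\<^bsub>A\<^esub> h w \<odot>\<^bsub>A\<^esub> word_eval A g w)"
    using f h g W(2)
    by (intro finsum_cong') (auto simp: R.free_alg_coeff_closed word_eval_closed smult_l_distr)
  also have "\<dots> = free_eval K A g f \<oplus>\<^bsub>A\<^esub> free_eval K A g h"
    using free_eval_eq_finsum[OF g f W(1) _ W(2)] free_eval_eq_finsum[OF g h W(1) _ W(2)] f h g W(2)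
    by (simp add: finsum_addf R.free_alg_coeff_closed word_eval_closed Pi_def)
  finally show ?thesis .
qed

lemma free_eval_smult:
  assumes g: "g \<in> V \<rightarrow> carrier A" and f: "f \<in> carrier (free_alg K V)" and k: "k \<in> carrier K"
  shows "free_eval K A g (k \<odot>\<^bsub>free_alg K V\<^esub> f) = k \<odot>\<^bsub>A\<^esub> free_eval K A g f"
proof -
  let ?W = "{w. f w \<noteq> \<zero>\<^bsub>K\<^esub>}"
  have W: "finite ?W" "\<forall>w\<in>?W. set w \<subseteq> V"
    using f by (auto simp: R.finite_free_alg_support dest: R.free_alg_support)
  have sub: "{w. (k \<odot>\<^bsub>free_alg K V\<^esub> f) w \<noteq> \<zero>\<^bsub>K\<^esub>} \<subseteq> ?W"
    using f k by (auto simp: R.free_alg_smult R.free_alg_coeff_closed)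
  have "free_eval K A g (k \<odot>\<^bsub>free_alg K V\<^esub> f) = (\<Oplus>\<^bsub>A\<^esub>w\<in>?W. k \<odot>\<^bsub>A\<^esub> (f w \<odot>\<^bsub>A\<^esub> word_eval A g w))"
    using free_eval_eq_finsum[OF g R.free_alg_smult_closed[OF k f] W(1) sub W(2)] f k g W(2)
    by (auto simp: R.free_alg_smult R.free_alg_coeff_closed word_eval_closed smult_assoc1 intro!: finsum_cong')
  also have "\<dots> = k \<odot>\<^bsub>A\<^esub> free_eval K A g f"
    unfolding free_eval_def using f k g W(2)
    by (simp add: finsum_smult_ldistr[OF W(1) k] R.free_alg_coeff_closed word_eval_closed Pi_def)
  finally show ?thesis .
qed

lemma free_eval_monom:
  fixes V :: "nat set"
  assumes g: "g \<in> V \<rightarrow> carrier A" and w: "w \<noteq> []" "set w \<subseteq> V" and k: "k \<in> carrier K"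
  shows "free_eval K A g (free_monom K w k) = k \<odot>\<^bsub>A\<^esub> word_eval A g w"
proof -
  have "free_eval K A g (free_monom K w k) = (\<Oplus>\<^bsub>A\<^esub>t\<in>{w}. free_monom K w k t \<odot>\<^bsub>A\<^esub> word_eval A g t)"
    by (rule free_eval_eq_finsum[OF g R.free_monom_closed[OF w k]]) (auto simp: free_monom_def w)
  then show ?thesis using k g w by (simp add: free_monom_def word_eval_closed)
qed

lemma free_eval_mult:
  assumes g: "g \<in> V \<rightarrow> carrier A"
    and f: "f \<in> carrier (free_alg K V)" and h: "h \<in> carrier (free_alg K V)"
  shows "free_eval K A g (f \<otimes>\<^bsub>free_alg K V\<^esub> h) = free_eval K A g f \<otimes>\<^bsub>A\<^esub> free_eval K A g h"
proof -
  let ?F = "free_alg K V" and ?e = "free_eval K A g"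
  note closed = R.free_alg_mult_closed R.free_monom_closed free_eval_closed[OF g] word_eval_closed[OF g]
  have monom2: "?e (free_monom K u a \<otimes>\<^bsub>?F\<^esub> free_monom K v b) = ?e (free_monom K u a) \<otimes>\<^bsub>A\<^esub> ?e (free_monom K v b)"
    if "u \<noteq> []" "set u \<subseteq> V" "a \<in> carrier K" "v \<noteq> []" "set v \<subseteq> V" "b \<in> carrier K" for u a v b
    using that g by (simp add: R.free_monom_mult free_eval_monom word_eval_append closed
        smult_mult_left smult_mult_right smult_assoc1 smult_lcomm)
  have monom: "?e (free_monom K u a \<otimes>\<^bsub>?F\<^esub> h) = ?e (free_monom K u a) \<otimes>\<^bsub>A\<^esub> ?e h"
    if "u \<noteq> []" "set u \<subseteq> V" "a \<in> carrier K" "h \<in> carrier ?F" for u a h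
    using that(4)
  proof (induction h rule: R.free_alg_monom_induct)
    case zero
    then show ?case using that by (simp add: R.free_alg_r_null free_eval_zero closed)
  next
    case (add_monom h w k)
    then show ?case
      using that by (simp add: R.free_alg_r_distr closed free_eval_add[OF g] r_distr monom2)
  qed
  show ?thesis
    using f
  proof (induction f rule: R.free_alg_monom_induct)
    case zero
    then show ?case using h by (simp add: R.free_alg_l_null free_eval_zero closed)
  next
    case (add_monom f w k)
    then show ?case
      using h by (simp add: R.free_alg_l_distr closed free_eval_add[OF g] l_distr monom)
  qed
qed

lemma alg_hom_free_eval: "g \<in> V \<rightarrow> carrier A \<Longrightarrow> alg_hom K (free_alg K V) A (free_eval K A g)"
  by (rule alg_homI)
    (simp_all add: free_eval_closed free_eval_add free_eval_mult free_eval_smult)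

lemma free_eval_gen:
  fixes V :: "nat set"
  shows "\<lbrakk>g \<in> V \<rightarrow> carrier A; v \<in> V\<rbrakk> \<Longrightarrow> free_eval K A g (free_gen K v) = g v"
  by (simp add: free_eval_monom Pi_iff)

end

lemma (in cring) free_alg_hom_eqI:
  assumes C: "kalgebra R C"
    and f: "alg_hom R (free_alg R V) C f" and g: "alg_hom R (free_alg R V) C g"
    and agree: "\<And>v. v \<in> V \<Longrightarrow> f (free_gen R v) = g (free_gen R v)"
    and x: "x \<in> carrier (free_alg R V)"
  shows "f x = g x"
  using x
proof (induction x rule: free_alg_gen_induct)
  case zero
  show ?case
    using alg_hom_zero[OF abelian_group_free_alg kalgebra.abelian_group[OF C] f]
      alg_hom_zero[OF abelian_group_free_alg kalgebra.abelian_group[OF C] g] by simp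
qed (simp_all add: agree alg_hom_add[OF f] alg_hom_add[OF g] alg_hom_mult[OF f] alg_hom_mult[OF g]
    alg_hom_smult[OF f] alg_hom_smult[OF g])

lemma (in cring) free_alg_carrier_mono: "V \<subseteq> W \<Longrightarrow> carrier (free_alg R V) \<subseteq> carrier (free_alg R W)"
  by (auto simp: free_alg_carrier_iff; blast)

lemma (in cring) alg_hom_free_alg_incl: "V \<subseteq> W \<Longrightarrow> alg_hom R (free_alg R V) (free_alg R W) id"
  using free_alg_carrier_mono[of V W]
  by (intro alg_homI) (auto simp: free_alg_add free_alg_mult free_alg_smult)

section \<open>Presentations\<close>

lemma alg_coset_kernel_eq_iff:
  assumes F: "kalgebra K F" and C: "kalgebra K C" and f: "alg_hom K F C f"
    and x: "x \<in> carrier F" and y: "y \<in> carrier F"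
  shows "alg_coset F {x \<in> carrier F. f x = \<zero>\<^bsub>C\<^esub>} x = alg_coset F {x \<in> carrier F. f x = \<zero>\<^bsub>C\<^esub>} y
    \<longleftrightarrow> f x = f y"
proof -
  interpret F: kalgebra K F by (rule F)
  interpret C: kalgebra K C by (rule C)
  have "alg_coset F {x \<in> carrier F. f x = \<zero>\<^bsub>C\<^esub>} x = alg_coset F {x \<in> carrier F. f x = \<zero>\<^bsub>C\<^esub>} y
      \<longleftrightarrow> x \<ominus>\<^bsub>F\<^esub> y \<in> {x \<in> carrier F. f x = \<zero>\<^bsub>C\<^esub>}"
    by (rule F.alg_coset_eq_iff[OF alg_hom_kernel_ideal[OF F C f] x y])
  also have "\<dots> \<longleftrightarrow> f x \<ominus>\<^bsub>C\<^esub> f y = \<zero>\<^bsub>C\<^esub>"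
    using x y by (simp add: alg_hom_diff[OF F.abelian_group C.abelian_group f])
  also have "\<dots> \<longleftrightarrow> f x = f y"
    using x y by (simp add: C.diff_eq_zero_iff alg_hom_closed[OF f])
  finally show ?thesis .
qed

lemma alg_iso_quot_kernel:
  assumes F: "kalgebra K F" and C: "kalgebra K C"
    and f: "alg_hom K F C f" and surj: "f ` carrier F = carrier C"
  shows "alg_iso K C (quot_alg K F {x \<in> carrier F. f x = \<zero>\<^bsub>C\<^esub>})"
proof -
  interpret F: kalgebra K F by (rule F)
  interpret C: kalgebra K C by (rule C)
  define N where "N = {x \<in> carrier F. f x = \<zero>\<^bsub>C\<^esub>}"
  have N: "alg_ideal K F N" unfolding N_def by (rule alg_hom_kernel_ideal[OF F C f])
  note coset_eq = alg_coset_kernel_eq_iff[OF F C f, folded N_def]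
  define pre where "pre c = (SOME x. x \<in> carrier F \<and> f x = c)" for c
  have pre: "pre c \<in> carrier F \<and> f (pre c) = c" if "c \<in> carrier C" for c
  proof -
    from that surj have "c \<in> f ` carrier F" by simp
    then obtain x where "x \<in> carrier F" "f x = c" by (rule imageE) simp
    then have "x \<in> carrier F \<and> f x = c" by simp
    then show ?thesis unfolding pre_def by (rule someI)
  qed
  define \<phi> where "\<phi> c = alg_coset F N (pre c)" for c
  have inj: "inj_on \<phi> (carrier C)"
  proof (rule inj_onI)
    fix a b assume "a \<in> carrier C" "b \<in> carrier C" "\<phi> a = \<phi> b"
    then show "a = b" using pre[of a] pre[of b] coset_eq[of "pre a" "pre b"] by (simp add: \<phi>_def)
  qed
  have onto: "\<phi> ` carrier C = carrier (quot_alg K F N)"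
  proof
    show "\<phi> ` carrier C \<subseteq> carrier (quot_alg K F N)"
      using pre by (auto simp: \<phi>_def F.quot_alg_carrier)
    show "carrier (quot_alg K F N) \<subseteq> \<phi> ` carrier C"
    proof
      fix X assume "X \<in> carrier (quot_alg K F N)"
      then obtain x where x: "x \<in> carrier F" "X = alg_coset F N x" by (rule F.quot_alg_elem)
      then have "\<phi> (f x) = X"
        unfolding \<phi>_def using pre[of "f x"] alg_hom_closed[OF f] coset_eq by simp
      then show "X \<in> \<phi> ` carrier C" using x alg_hom_closed[OF f] by blast
    qed
  qed
  have hom: "\<phi> (a \<oplus>\<^bsub>C\<^esub> b) = \<phi> a \<oplus>\<^bsub>quot_alg K F N\<^esub> \<phi> b \<and> \<phi> (a \<otimes>\<^bsub>C\<^esub> b) = \<phi> a \<otimes>\<^bsub>quot_alg K F N\<^esub> \<phi> b"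
    if "a \<in> carrier C" "b \<in> carrier C" for a b
    using that pre[of a] pre[of b] pre[of "a \<oplus>\<^bsub>C\<^esub> b"] pre[of "a \<otimes>\<^bsub>C\<^esub> b"]
    by (simp add: \<phi>_def F.quot_alg_add[OF N] F.quot_alg_mult[OF N] coset_eq alg_hom_add[OF f]
        alg_hom_mult[OF f])
  have smult: "\<phi> (k \<odot>\<^bsub>C\<^esub> a) = k \<odot>\<^bsub>quot_alg K F N\<^esub> \<phi> a" if "k \<in> carrier K" "a \<in> carrier C" for k a
    using that pre[of a] pre[of "k \<odot>\<^bsub>C\<^esub> a"]
    by (simp add: \<phi>_def F.quot_alg_smult[OF N] coset_eq alg_hom_smult[OF f])
  show ?thesis
    unfolding N_def[symmetric] alg_iso_def
    using inj onto hom smult by (intro exI[of _ \<phi>] conjI ballI) (auto simp: bij_betw_def)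
qed

lemma alg_iso_inverse:
  assumes C: "kalgebra K C" and iso: "alg_iso K C D"
  obtains g where "alg_hom K D C g" "bij_betw g (carrier D) (carrier C)"
proof -
  interpret C: kalgebra K C by (rule C)
  obtain h where h: "bij_betw h (carrier C) (carrier D)"
    and hom: "\<And>x y. \<lbrakk>x \<in> carrier C; y \<in> carrier C\<rbrakk> \<Longrightarrow>
        h (x \<oplus>\<^bsub>C\<^esub> y) = h x \<oplus>\<^bsub>D\<^esub> h y \<and> h (x \<otimes>\<^bsub>C\<^esub> y) = h x \<otimes>\<^bsub>D\<^esub> h y"
    and sm: "\<And>k x. \<lbrakk>k \<in> carrier K; x \<in> carrier C\<rbrakk> \<Longrightarrow> h (k \<odot>\<^bsub>C\<^esub> x) = k \<odot>\<^bsub>D\<^esub> h x"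
    using iso unfolding alg_iso_def by auto
  let ?g = "inv_into (carrier C) h"
  have g: "bij_betw ?g (carrier D) (carrier C)" by (rule bij_betw_inv_into[OF h])
  have inv: "?g (h x) = x" if "x \<in> carrier C" for x
    using h that by (simp add: bij_betw_def)
  have surj: "\<exists>x\<in>carrier C. y = h x" if "y \<in> carrier D" for y
    using h that by (auto simp: bij_betw_def)
  have "alg_hom K D C ?g"
  proof (rule alg_homI)
    show "?g y \<in> carrier C" if "y \<in> carrier D" for y
      using g that by (auto simp: bij_betw_def)
    fix y z assume "y \<in> carrier D" "z \<in> carrier D"
    then obtain a b where ab: "a \<in> carrier C" "b \<in> carrier C" "y = h a" "z = h b"
      using surj by meson
    then have "y \<oplus>\<^bsub>D\<^esub> z = h (a \<oplus>\<^bsub>C\<^esub> b)" "y \<otimes>\<^bsub>D\<^esub> z = h (a \<otimes>\<^bsub>C\<^esub> b)"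
      using hom[OF ab(1,2)] by simp_all
    then show "?g (y \<oplus>\<^bsub>D\<^esub> z) = ?g y \<oplus>\<^bsub>C\<^esub> ?g z" "?g (y \<otimes>\<^bsub>D\<^esub> z) = ?g y \<otimes>\<^bsub>C\<^esub> ?g z"
      using ab by (simp_all add: inv)
  next
    fix k y assume "k \<in> carrier K" "y \<in> carrier D"
    then obtain a where a: "a \<in> carrier C" "y = h a" using surj by meson
    then have "k \<odot>\<^bsub>D\<^esub> y = h (k \<odot>\<^bsub>C\<^esub> a)" using sm \<open>k \<in> carrier K\<close> by simp
    then show "?g (k \<odot>\<^bsub>D\<^esub> y) = k \<odot>\<^bsub>C\<^esub> ?g y" using a \<open>k \<in> carrier K\<close> by (simp add: inv)
  qed
  then show ?thesis using g by (rule that)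
qed

lemma alg_iso_quot_imp_surj_hom:
  assumes F: "kalgebra K F" and C: "kalgebra K C" and I: "alg_ideal K F I"
    and iso: "alg_iso K C (quot_alg K F I)"
  obtains f where "alg_hom K F C f" "f ` carrier F = carrier C" "{x \<in> carrier F. f x = \<zero>\<^bsub>C\<^esub>} = I"
proof -
  interpret F: kalgebra K F by (rule F)
  let ?Q = "quot_alg K F I"
  interpret Q: kalgebra K ?Q by (rule F.kalgebra_quot_alg[OF I])
  interpret C: kalgebra K C by (rule C)
  obtain g where g: "alg_hom K ?Q C g" "bij_betw g (carrier ?Q) (carrier C)"
    using alg_iso_inverse[OF C iso] by blast
  let ?f = "g \<circ> alg_coset F I"
  have hom: "alg_hom K F C ?f" by (rule alg_hom_comp[OF F.alg_hom_alg_coset[OF I] g(1)])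
  have onto: "?f ` carrier F = carrier C"
    using g(2) by (simp add: bij_betw_def F.quot_alg_carrier image_image)
  have "?f x = \<zero>\<^bsub>C\<^esub> \<longleftrightarrow> x \<in> I" if x: "x \<in> carrier F" for x
  proof -
    have zero: "g \<zero>\<^bsub>?Q\<^esub> = \<zero>\<^bsub>C\<^esub>"
      by (rule alg_hom_zero[OF Q.abelian_group C.abelian_group g(1)])
    have "?f x = \<zero>\<^bsub>C\<^esub> \<longleftrightarrow> g (alg_coset F I x) = g \<zero>\<^bsub>?Q\<^esub>" by (simp add: zero)
    also have "\<dots> \<longleftrightarrow> alg_coset F I x = \<zero>\<^bsub>?Q\<^esub>"
      using g(2) x Q.zero_closed by (intro inj_on_eq_iff) (auto simp: bij_betw_def F.quot_alg_carrier)
    also have "\<dots> \<longleftrightarrow> x \<in> I" by (rule F.alg_coset_eq_zero_iff[OF I x])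
    finally show ?thesis .
  qed
  then have "{x \<in> carrier F. ?f x = \<zero>\<^bsub>C\<^esub>} = I" using alg_ideal_subset[OF I] by auto
  with hom onto show ?thesis by (rule that)
qed

lemma fg_algebra_iff_surj_hom:
  assumes K: "cring K" and C: "kalgebra K C"
  shows "fg_algebra K C \<longleftrightarrow>
    (\<exists>X f. finite X \<and> alg_hom K (free_alg K X) C f \<and> f ` carrier (free_alg K X) = carrier C)"
proof
  assume "fg_algebra K C"
  then obtain X I where X: "finite X" "alg_ideal K (free_alg K X) I"
      "alg_iso K C (quot_alg K (free_alg K X) I)"
    unfolding fg_algebra_def by blast
  obtain f where "alg_hom K (free_alg K X) C f" "f ` carrier (free_alg K X) = carrier C"
    by (rule alg_iso_quot_imp_surj_hom[OF cring.kalgebra_free_alg[OF K] C X(2,3)])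
  with X(1) show "\<exists>X f. finite X \<and> alg_hom K (free_alg K X) C f \<and> f ` carrier (free_alg K X) = carrier C"
    by blast
next
  assume "\<exists>X f. finite X \<and> alg_hom K (free_alg K X) C f \<and> f ` carrier (free_alg K X) = carrier C"
  then obtain X f where X: "finite X" "alg_hom K (free_alg K X) C f" "f ` carrier (free_alg K X) = carrier C"
    by blast
  note F = cring.kalgebra_free_alg[OF K, of X]
  show "fg_algebra K C"
    unfolding fg_algebra_def
    using X(1) alg_hom_kernel_ideal[OF F C X(2)] alg_iso_quot_kernel[OF F C X(2,3)] by blast
qed

lemma fp_algebra_iff_surj_hom:
  assumes K: "cring K" and C: "kalgebra K C"
  shows "fp_algebra K C \<longleftrightarrow>
    (\<exists>X f. finite X \<and> alg_hom K (free_alg K X) C f \<and> f ` carrier (free_alg K X) = carrier C \<and>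
      fg_ideal K (free_alg K X) {x \<in> carrier (free_alg K X). f x = \<zero>\<^bsub>C\<^esub>})"
proof
  assume "fp_algebra K C"
  then obtain X I where X: "finite X" "fg_ideal K (free_alg K X) I"
      "alg_iso K C (quot_alg K (free_alg K X) I)"
    unfolding fp_algebra_def by blast
  obtain f where "alg_hom K (free_alg K X) C f" "f ` carrier (free_alg K X) = carrier C"
      "{x \<in> carrier (free_alg K X). f x = \<zero>\<^bsub>C\<^esub>} = I"
    using X(2) unfolding fg_ideal_def
    by (rule alg_iso_quot_imp_surj_hom[OF cring.kalgebra_free_alg[OF K] C conjunct1 X(3)])
  with X(1,2) show "\<exists>X f. finite X \<and> alg_hom K (free_alg K X) C f \<and> f ` carrier (free_alg K X) = carrier C \<and>
      fg_ideal K (free_alg K X) {x \<in> carrier (free_alg K X). f x = \<zero>\<^bsub>C\<^esub>}"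
    by blast
next
  assume "\<exists>X f. finite X \<and> alg_hom K (free_alg K X) C f \<and> f ` carrier (free_alg K X) = carrier C \<and>
      fg_ideal K (free_alg K X) {x \<in> carrier (free_alg K X). f x = \<zero>\<^bsub>C\<^esub>}"
  then obtain X f where X: "finite X" "alg_hom K (free_alg K X) C f"
      "f ` carrier (free_alg K X) = carrier C" "fg_ideal K (free_alg K X) {x \<in> carrier (free_alg K X). f x = \<zero>\<^bsub>C\<^esub>}"
    by blast
  note F = cring.kalgebra_free_alg[OF K, of X]
  show "fp_algebra K C"
    unfolding fp_algebra_def using X(1,4) alg_iso_quot_kernel[OF F C X(2,3)] by blast
qed

lemma (in kalgebra) free_alg_hom_lift:
  fixes X :: "nat set"
  assumes D: "kalgebra K D" and q: "alg_hom K A D q" and onto: "q ` carrier A = carrier D"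
    and p: "alg_hom K (free_alg K X) D p"
  obtains \<psi> where "alg_hom K (free_alg K X) A \<psi>" "\<And>u. u \<in> carrier (free_alg K X) \<Longrightarrow> q (\<psi> u) = p u"
proof -
  have "\<forall>x\<in>X. \<exists>a. a \<in> carrier A \<and> q a = p (free_gen K x)"
  proof
    fix x assume "x \<in> X"
    then have "p (free_gen K x) \<in> q ` carrier A"
      using onto alg_hom_closed[OF p] R.free_monom_closed[of "[x]" X] by simp
    then show "\<exists>a. a \<in> carrier A \<and> q a = p (free_gen K x)" by force
  qed
  from bchoice[OF this] obtain a where a: "\<forall>x\<in>X. a x \<in> carrier A \<and> q (a x) = p (free_gen K x)"
    by blast
  then have a_Pi: "a \<in> X \<rightarrow> carrier A" by blast
  have "q (free_eval K A a u) = p u" if "u \<in> carrier (free_alg K X)" for u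
    using R.free_alg_hom_eqI[OF D alg_hom_comp[OF alg_hom_free_eval[OF a_Pi] q] p _ that]
      a free_eval_gen[OF a_Pi] by simp
  with alg_hom_free_eval[OF a_Pi] show ?thesis by (rule that)
qed

lemma alg_hom_widen_codomain:
  "\<lbrakk>alg_hom K F (A\<lparr>carrier := B\<rparr>) f; B \<subseteq> carrier A\<rbrakk> \<Longrightarrow> alg_hom K F A f"
  unfolding alg_hom_def by auto

section \<open>Extensions by an ideal\<close>

locale ideal_extension =
  fixes K :: "('k,'e) ring_scheme" and A :: "('k,'a,'m) module_scheme" and B :: "'a set"
    and X Y :: "nat set" and \<phi> \<psi> :: "(nat list \<Rightarrow> 'k) \<Rightarrow> 'a"
  assumes cring: "cring K" and kalgebra: "kalgebra K A" and ideal: "alg_ideal K A B"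
    and finite_X: "finite X" and finite_Y: "finite Y"
    and \<phi>_hom: "alg_hom K (free_alg K Y) A \<phi>" and \<phi>_image: "\<phi> ` carrier (free_alg K Y) = B"
    and \<psi>_hom: "alg_hom K (free_alg K X) A \<psi>"
    and \<psi>_covers: "\<And>a. a \<in> carrier A \<Longrightarrow> \<exists>u\<in>carrier (free_alg K X). a \<ominus>\<^bsub>A\<^esub> \<psi> u \<in> B"
begin

interpretation R: cring K by (rule cring)
interpretation A: kalgebra K A by (rule kalgebra)

definition offset :: nat where "offset = Suc (Max (insert 0 Y))"

definition shift :: "nat \<Rightarrow> nat" where "shift x = x + offset"

definition Z :: "nat set" where "Z = Y \<union> shift ` X"

abbreviation (input) FZ where "FZ \<equiv> free_alg K Z"

definition gens :: "nat \<Rightarrow> 'a" where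
  "gens v = (if v \<in> Y then \<phi> (free_gen K v) else \<psi> (free_gen K (v - offset)))"

definition \<iota> :: "(nat list \<Rightarrow> 'k) \<Rightarrow> nat list \<Rightarrow> 'k" where
  "\<iota> = free_eval K FZ (\<lambda>x. free_gen K (shift x))"

definition e :: "(nat list \<Rightarrow> 'k) \<Rightarrow> 'a" where "e = free_eval K A gens"

lemma shift_notin_Y: "shift x \<notin> Y"
proof
  assume "shift x \<in> Y"
  then have "shift x \<le> Max (insert 0 Y)" using finite_Y by simp
  then show False by (simp add: shift_def offset_def)
qed

lemma finite_Z: "finite Z"
  unfolding Z_def using finite_X finite_Y by simp

lemma Y_subset_Z: "Y \<subseteq> Z"
  unfolding Z_def by blast

interpretation FZ: kalgebra K "free_alg K Z" by (rule R.kalgebra_free_alg)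

lemma gens_Y: "y \<in> Y \<Longrightarrow> gens y = \<phi> (free_gen K y)"
  by (simp add: gens_def)

lemma gens_shift: "gens (shift x) = \<psi> (free_gen K x)"
  using shift_notin_Y by (simp add: gens_def shift_def)

lemma gens_closed: "gens \<in> Z \<rightarrow> carrier A"
  using alg_hom_closed[OF \<phi>_hom] alg_hom_closed[OF \<psi>_hom] R.free_monom_closed
  by (auto simp: Z_def gens_Y gens_shift)

lemma alg_hom_\<iota>: "alg_hom K (free_alg K X) (FZ) \<iota>"
  unfolding \<iota>_def using R.free_monom_closed
  by (intro FZ.alg_hom_free_eval) (auto simp: Z_def)

lemma \<iota>_gen: "x \<in> X \<Longrightarrow> \<iota> (free_gen K x) = free_gen K (shift x)"
  unfolding \<iota>_def using R.free_monom_closed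
  by (intro FZ.free_eval_gen) (auto simp: Z_def)

lemma alg_hom_e: "alg_hom K (FZ) A e"
  unfolding e_def by (rule A.alg_hom_free_eval[OF gens_closed])

lemma e_gen: "v \<in> Z \<Longrightarrow> e (free_gen K v) = gens v"
  unfolding e_def by (rule A.free_eval_gen[OF gens_closed])

lemma FY_subset_FZ: "carrier (free_alg K Y) \<subseteq> carrier (FZ)"
  by (rule R.free_alg_carrier_mono[OF Y_subset_Z])

lemma e_eq_\<phi>: "q \<in> carrier (free_alg K Y) \<Longrightarrow> e q = \<phi> q"
  using R.free_alg_hom_eqI[OF kalgebra
      alg_hom_comp[OF R.alg_hom_free_alg_incl[OF Y_subset_Z] alg_hom_e] \<phi>_hom]
    Y_subset_Z by (simp add: e_gen gens_Y subset_iff)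

lemma e_\<iota>: "u \<in> carrier (free_alg K X) \<Longrightarrow> e (\<iota> u) = \<psi> u"
  using R.free_alg_hom_eqI[OF kalgebra alg_hom_comp[OF alg_hom_\<iota> alg_hom_e] \<psi>_hom]
  by (simp add: \<iota>_gen e_gen gens_shift Z_def)

lemma e_onto: "e ` carrier (FZ) = carrier A"
proof
  show "e ` carrier (FZ) \<subseteq> carrier A" using alg_hom_closed[OF alg_hom_e] by blast
  show "carrier A \<subseteq> e ` carrier (FZ)"
  proof
    fix a assume a: "a \<in> carrier A"
    then obtain u where u: "u \<in> carrier (free_alg K X)" "a \<ominus>\<^bsub>A\<^esub> \<psi> u \<in> B" using \<psi>_covers by blast
    then obtain q where q: "q \<in> carrier (free_alg K Y)" "\<phi> q = a \<ominus>\<^bsub>A\<^esub> \<psi> u"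
      using \<phi>_image by (metis imageE)
    have \<iota>u: "\<iota> u \<in> carrier (FZ)" by (rule alg_hom_closed[OF alg_hom_\<iota> u(1)])
    have qZ: "q \<in> carrier (FZ)" using q(1) FY_subset_FZ by blast
    have "e (\<iota> u \<oplus>\<^bsub>FZ\<^esub> q) = \<psi> u \<oplus>\<^bsub>A\<^esub> (a \<ominus>\<^bsub>A\<^esub> \<psi> u)"
      using alg_hom_add[OF alg_hom_e \<iota>u qZ] e_\<iota>[OF u(1)] e_eq_\<phi>[OF q(1)] q(2) by simp
    also have "\<dots> = a" using a alg_hom_closed[OF \<psi>_hom u(1)] by (rule A.add_diff_cancel_left[rotated])
    finally show "a \<in> e ` carrier (FZ)"
      using FZ.a_closed[OF \<iota>u qZ] by blast
  qed
qed

lemma fg_algebra: "fg_algebra K A"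
  using fg_algebra_iff_surj_hom[OF cring kalgebra] finite_Z alg_hom_e e_onto by blast

end

locale ideal_extension_fp = ideal_extension K A B X Y \<phi> \<psi>
  for K :: "('k,'e) ring_scheme" and A :: "('k,'a,'m) module_scheme" and B X Y \<phi> \<psi> +
  fixes RX RY :: "(nat list \<Rightarrow> 'k) set"
  assumes finite_RX: "finite RX" and RX_subset: "RX \<subseteq> carrier (free_alg K X)"
    and \<psi>_preimage: "{u \<in> carrier (free_alg K X). \<psi> u \<in> B} = alg_ideal_span K (free_alg K X) RX"
    and finite_RY: "finite RY" and RY_subset: "RY \<subseteq> carrier (free_alg K Y)"
    and \<phi>_kernel: "{q \<in> carrier (free_alg K Y). \<phi> q = \<zero>\<^bsub>A\<^esub>} = alg_ideal_span K (free_alg K Y) RY"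
begin

interpretation R: cring K by (rule cring)
interpretation A: kalgebra K A by (rule kalgebra)
interpretation FX: kalgebra K "free_alg K X" by (rule R.kalgebra_free_alg)
interpretation FY: kalgebra K "free_alg K Y" by (rule R.kalgebra_free_alg)
interpretation FZ: kalgebra K "free_alg K Z" by (rule R.kalgebra_free_alg)

lemma FY_ops:
  "a \<oplus>\<^bsub>free_alg K Y\<^esub> b = a \<oplus>\<^bsub>FZ\<^esub> b" "a \<otimes>\<^bsub>free_alg K Y\<^esub> b = a \<otimes>\<^bsub>FZ\<^esub> b"
  "k \<odot>\<^bsub>free_alg K Y\<^esub> a = k \<odot>\<^bsub>FZ\<^esub> a" "\<zero>\<^bsub>free_alg K Y\<^esub> = \<zero>\<^bsub>FZ\<^esub>"
  by (simp_all add: R.free_alg_add R.free_alg_mult R.free_alg_smult R.free_alg_zero)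

lemma FY_in_FZ: "q \<in> carrier (free_alg K Y) \<Longrightarrow> q \<in> carrier FZ"
  using FY_subset_FZ by blast

\<comment> \<open>Only meaningful when \<open>e p \<in> B\<close>; otherwise \<open>SOME\<close> picks an arbitrary value.\<close>
definition lift :: "(nat list \<Rightarrow> 'k) \<Rightarrow> nat list \<Rightarrow> 'k" where
  "lift p = (SOME q. q \<in> carrier (free_alg K Y) \<and> \<phi> q = e p)"

definition mixed_products :: "(nat list \<Rightarrow> 'k) set" where
  "mixed_products = {free_gen K (shift x) \<otimes>\<^bsub>FZ\<^esub> free_gen K y | x y. x \<in> X \<and> y \<in> Y}
     \<union> {free_gen K y \<otimes>\<^bsub>FZ\<^esub> free_gen K (shift x) | x y. x \<in> X \<and> y \<in> Y}"

definition reducible :: "(nat list \<Rightarrow> 'k) set" where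
  "reducible = \<iota> ` RX \<union> mixed_products"

definition relators :: "(nat list \<Rightarrow> 'k) set" where
  "relators = RY \<union> (\<lambda>p. p \<ominus>\<^bsub>FZ\<^esub> lift p) ` reducible"

definition N :: "(nat list \<Rightarrow> 'k) set" where "N = alg_ideal_span K FZ relators"

\<comment> \<open>The set F<Y> + N of the proof idea.\<close>
definition P :: "(nat list \<Rightarrow> 'k) set" where
  "P = {t \<in> carrier FZ. \<exists>q\<in>carrier (free_alg K Y). alg_coset FZ N t = alg_coset FZ N q}"

lemma lift:
  assumes "p \<in> carrier FZ" "e p \<in> B"
  shows "lift p \<in> carrier (free_alg K Y)" "\<phi> (lift p) = e p"
proof -
  obtain q where "q \<in> carrier (free_alg K Y)" "\<phi> q = e p"
    using assms(2) \<phi>_image by (metis imageE)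
  then have "\<exists>q. q \<in> carrier (free_alg K Y) \<and> \<phi> q = e p" by blast
  then have "lift p \<in> carrier (free_alg K Y) \<and> \<phi> (lift p) = e p"
    unfolding lift_def by (rule someI_ex)
  then show "lift p \<in> carrier (free_alg K Y)" "\<phi> (lift p) = e p" by simp_all
qed

lemma
  assumes "p \<in> reducible"
  shows reducible_carrier: "p \<in> carrier FZ" and e_reducible: "e p \<in> B"
proof -
  have gen_closed: "free_gen K y \<in> carrier FZ" "free_gen K (shift x) \<in> carrier FZ"
    if "x \<in> X" "y \<in> Y" for x y
    using that by (auto simp: Z_def intro!: R.free_monom_closed)
  have gen_in_B: "e (free_gen K y) \<in> B" if "y \<in> Y" for y
    using that Y_subset_Z R.free_monom_closed[of "[y]" Y] \<phi>_image
    by (auto simp: e_gen gens_Y)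
  have "p \<in> carrier FZ \<and> e p \<in> B"
  proof (cases "p \<in> \<iota> ` RX")
    case True
    then obtain r where r: "r \<in> RX" "p = \<iota> r" by (rule imageE) simp
    have "r \<in> {u \<in> carrier (free_alg K X). \<psi> u \<in> B}"
      unfolding \<psi>_preimage using r(1) alg_ideal_span_superset[of RX K "free_alg K X"] by blast
    then show ?thesis using r(2) alg_hom_closed[OF alg_hom_\<iota>] e_\<iota> by simp
  next
    case False
    then obtain x y where xy: "x \<in> X" "y \<in> Y" and
      p: "p = free_gen K (shift x) \<otimes>\<^bsub>FZ\<^esub> free_gen K y \<or> p = free_gen K y \<otimes>\<^bsub>FZ\<^esub> free_gen K (shift x)"
      using assms unfolding reducible_def mixed_products_def by blast
    let ?a = "free_gen K (shift x)" and ?b = "free_gen K y"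
    note ab = gen_closed[OF xy]
    have "e ?a \<in> carrier A" "e ?b \<in> B"
      using alg_hom_closed[OF alg_hom_e ab(2)] gen_in_B[OF xy(2)] by simp_all
    then have "e (?a \<otimes>\<^bsub>FZ\<^esub> ?b) \<in> B" "e (?b \<otimes>\<^bsub>FZ\<^esub> ?a) \<in> B"
      using alg_hom_mult[OF alg_hom_e ab(2,1)] alg_hom_mult[OF alg_hom_e ab(1,2)]
        alg_ideal_mult_left[OF ideal] alg_ideal_mult_right[OF ideal] by simp_all
    then show ?thesis using p ab by auto
  qed
  then show "p \<in> carrier FZ" "e p \<in> B" by simp_all
qed

lemma relators_in_kernel: "relators \<subseteq> {p \<in> carrier FZ. e p = \<zero>\<^bsub>A\<^esub>}"
proof
  fix r assume "r \<in> relators"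
  then consider "r \<in> RY" | p where "p \<in> reducible" "r = p \<ominus>\<^bsub>FZ\<^esub> lift p"
    unfolding relators_def by blast
  then show "r \<in> {p \<in> carrier FZ. e p = \<zero>\<^bsub>A\<^esub>}"
  proof cases
    case 1
    then have "r \<in> {q \<in> carrier (free_alg K Y). \<phi> q = \<zero>\<^bsub>A\<^esub>}"
      unfolding \<phi>_kernel using alg_ideal_span_superset[of RY K "free_alg K Y"] by blast
    then show ?thesis using e_eq_\<phi> FY_in_FZ by simp
  next
    case 2
    note p = reducible_carrier[OF 2(1)]
      and q = lift[OF reducible_carrier[OF 2(1)] e_reducible[OF 2(1)]]
    have "e (lift p) = e p" using e_eq_\<phi>[OF q(1)] q(2) by simp
    then have "e r = \<zero>\<^bsub>A\<^esub>"
      using alg_hom_diff[OF FZ.abelian_group A.abelian_group alg_hom_e p(1) FY_in_FZ[OF q(1)]]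
        A.diff_eq_zero_iff alg_hom_closed[OF alg_hom_e p(1)] 2(2) by simp
    then show ?thesis using 2(2) p(1) FY_in_FZ[OF q(1)] by simp
  qed
qed

lemma relators_subset: "relators \<subseteq> carrier FZ"
  using relators_in_kernel by blast

lemma finite_relators: "finite relators"
  unfolding relators_def reducible_def mixed_products_def using finite_RX finite_RY finite_X finite_Y
  by (simp add: finite_image_set2)

lemma N_ideal: "alg_ideal K FZ N"
  unfolding N_def by (rule FZ.alg_ideal_span[OF relators_subset])

lemma kernel_e_ideal: "alg_ideal K FZ {p \<in> carrier FZ. e p = \<zero>\<^bsub>A\<^esub>}"
  by (rule alg_hom_kernel_ideal[OF FZ.kalgebra_axioms kalgebra alg_hom_e])

lemma N_subset_kernel: "N \<subseteq> {p \<in> carrier FZ. e p = \<zero>\<^bsub>A\<^esub>}"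
  unfolding N_def by (rule alg_ideal_span_least[OF kernel_e_ideal relators_in_kernel])

lemma e_coset_cong:
  assumes "s \<in> carrier FZ" "t \<in> carrier FZ" "alg_coset FZ N s = alg_coset FZ N t"
  shows "e s = e t"
proof -
  have "s \<ominus>\<^bsub>FZ\<^esub> t \<in> N" using assms FZ.alg_coset_eq_iff[OF N_ideal] by simp
  then have "e s \<ominus>\<^bsub>A\<^esub> e t = \<zero>\<^bsub>A\<^esub>"
    using N_subset_kernel alg_hom_diff[OF FZ.abelian_group A.abelian_group alg_hom_e assms(1,2)] by auto
  then show ?thesis using A.diff_eq_zero_iff alg_hom_closed[OF alg_hom_e] assms(1,2) by simp
qed

lemma P_carrier: "t \<in> P \<Longrightarrow> t \<in> carrier FZ"
  unfolding P_def by blast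

lemma FY_subset_P: "q \<in> carrier (free_alg K Y) \<Longrightarrow> q \<in> P"
  unfolding P_def using FY_in_FZ by blast

lemma P_coset_cong: "\<lbrakk>s \<in> carrier FZ; t \<in> P; alg_coset FZ N s = alg_coset FZ N t\<rbrakk> \<Longrightarrow> s \<in> P"
  unfolding P_def by auto

lemma reducible_in_P:
  assumes "p \<in> reducible"
  shows "p \<in> P"
proof -
  note p = reducible_carrier[OF assms]
    and q = lift[OF reducible_carrier[OF assms] e_reducible[OF assms]]
  have "p \<ominus>\<^bsub>FZ\<^esub> lift p \<in> N"
    using assms alg_ideal_span_superset[of relators K FZ] unfolding N_def relators_def by blast
  then have "alg_coset FZ N p = alg_coset FZ N (lift p)"
    using FZ.alg_coset_eq_iff[OF N_ideal p(1) FY_in_FZ[OF q(1)]] by simp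
  then show ?thesis by (rule P_coset_cong[OF p(1) FY_subset_P[OF q(1)]])
qed

lemma
  assumes s: "s \<in> P" and t: "t \<in> P"
  shows P_add_closed: "s \<oplus>\<^bsub>FZ\<^esub> t \<in> P" and P_mult_closed: "s \<otimes>\<^bsub>FZ\<^esub> t \<in> P"
proof -
  obtain q where q: "q \<in> carrier (free_alg K Y)" "alg_coset FZ N s = alg_coset FZ N q"
    using s unfolding P_def by blast
  obtain r where r: "r \<in> carrier (free_alg K Y)" "alg_coset FZ N t = alg_coset FZ N r"
    using t unfolding P_def by blast
  note closed = P_carrier[OF s] P_carrier[OF t] FY_in_FZ[OF q(1)] FY_in_FZ[OF r(1)]
  have "alg_coset FZ N (s \<oplus>\<^bsub>FZ\<^esub> t) = alg_coset FZ N (q \<oplus>\<^bsub>FZ\<^esub> r)"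
    using q(2) r(2) closed by (simp flip: FZ.quot_alg_add[OF N_ideal])
  moreover have "q \<oplus>\<^bsub>FZ\<^esub> r \<in> P"
    using FY_subset_P[OF FY.a_closed[OF q(1) r(1)]] by (simp only: FY_ops)
  ultimately show "s \<oplus>\<^bsub>FZ\<^esub> t \<in> P" using closed by (metis P_coset_cong FZ.a_closed)
  have "alg_coset FZ N (s \<otimes>\<^bsub>FZ\<^esub> t) = alg_coset FZ N (q \<otimes>\<^bsub>FZ\<^esub> r)"
    using q(2) r(2) closed by (simp flip: FZ.quot_alg_mult[OF N_ideal])
  moreover have "q \<otimes>\<^bsub>FZ\<^esub> r \<in> P"
    using FY_subset_P[OF FY.m_closed[OF q(1) r(1)]] by (simp only: FY_ops)
  ultimately show "s \<otimes>\<^bsub>FZ\<^esub> t \<in> P" using closed by (metis P_coset_cong FZ.m_closed)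
qed

lemma P_smult_closed:
  assumes k: "k \<in> carrier K" and t: "t \<in> P"
  shows "k \<odot>\<^bsub>FZ\<^esub> t \<in> P"
proof -
  obtain r where r: "r \<in> carrier (free_alg K Y)" "alg_coset FZ N t = alg_coset FZ N r"
    using t unfolding P_def by blast
  have "alg_coset FZ N (k \<odot>\<^bsub>FZ\<^esub> t) = alg_coset FZ N (k \<odot>\<^bsub>FZ\<^esub> r)"
    using r k P_carrier[OF t] FY_in_FZ[OF r(1)] by (simp flip: FZ.quot_alg_smult[OF N_ideal])
  moreover have "k \<odot>\<^bsub>FZ\<^esub> r \<in> P"
    using FY_subset_P[OF FY.smult_closed[OF k r(1)]] by (simp only: FY_ops)
  ultimately show ?thesis using k P_carrier[OF t] by (metis P_coset_cong FZ.smult_closed)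
qed

lemma P_mult_closed_of_FY:
  assumes s: "s \<in> carrier FZ"
    and FY: "\<And>q. q \<in> carrier (free_alg K Y) \<Longrightarrow> s \<otimes>\<^bsub>FZ\<^esub> q \<in> P \<and> q \<otimes>\<^bsub>FZ\<^esub> s \<in> P"
    and t: "t \<in> P"
  shows "s \<otimes>\<^bsub>FZ\<^esub> t \<in> P \<and> t \<otimes>\<^bsub>FZ\<^esub> s \<in> P"
proof -
  obtain q where q: "q \<in> carrier (free_alg K Y)" "alg_coset FZ N t = alg_coset FZ N q"
    using t unfolding P_def by blast
  note closed = s P_carrier[OF t] FY_in_FZ[OF q(1)]
  have "alg_coset FZ N (s \<otimes>\<^bsub>FZ\<^esub> t) = alg_coset FZ N (s \<otimes>\<^bsub>FZ\<^esub> q)"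
    "alg_coset FZ N (t \<otimes>\<^bsub>FZ\<^esub> s) = alg_coset FZ N (q \<otimes>\<^bsub>FZ\<^esub> s)"
    using q(2) closed by (simp_all flip: FZ.quot_alg_mult[OF N_ideal])
  then show ?thesis using FY[OF q(1)] closed by (metis P_coset_cong FZ.m_closed)
qed

lemma zero_in_P: "\<zero>\<^bsub>FZ\<^esub> \<in> P"
  using FY_subset_P[OF FY.zero_closed] by (simp only: FY_ops)

lemma new_gen_closed: "x \<in> X \<Longrightarrow> free_gen K (shift x) \<in> carrier FZ"
  by (rule R.free_monom_closed) (auto simp: Z_def)

lemma new_gen_mult_FY:
  assumes x: "x \<in> X" and q: "q \<in> carrier (free_alg K Y)"
  shows "free_gen K (shift x) \<otimes>\<^bsub>FZ\<^esub> q \<in> P \<and> q \<otimes>\<^bsub>FZ\<^esub> free_gen K (shift x) \<in> P"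
  using q
proof (induction q rule: R.free_alg_gen_induct)
  case zero
  then show ?case using new_gen_closed[OF x] zero_in_P by (simp add: FY_ops)
next
  case (gen y)
  then show ?case using x reducible_in_P unfolding reducible_def mixed_products_def by blast
next
  case (add a b)
  then show ?case
    using new_gen_closed[OF x] FY_in_FZ P_add_closed by (simp add: FY_ops FZ.r_distr FZ.l_distr)
next
  case (mult a b)
  let ?d = "free_gen K (shift x)"
  note closed = new_gen_closed[OF x] FY_in_FZ[OF mult(1)] FY_in_FZ[OF mult(2)]
  have "?d \<otimes>\<^bsub>FZ\<^esub> (a \<otimes>\<^bsub>FZ\<^esub> b) = (?d \<otimes>\<^bsub>FZ\<^esub> a) \<otimes>\<^bsub>FZ\<^esub> b"
    "(a \<otimes>\<^bsub>FZ\<^esub> b) \<otimes>\<^bsub>FZ\<^esub> ?d = a \<otimes>\<^bsub>FZ\<^esub> (b \<otimes>\<^bsub>FZ\<^esub> ?d)"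
    using closed by (simp_all add: FZ.m_assoc)
  then show ?case
    using mult FY_subset_P P_mult_closed by (simp add: FY_ops)
next
  case (smult k a)
  then show ?case
    using new_gen_closed[OF x] FY_in_FZ P_smult_closed
    by (simp add: FY_ops FZ.smult_mult_left FZ.smult_mult_right)
qed

lemma \<iota>_zero: "\<iota> \<zero>\<^bsub>free_alg K X\<^esub> = \<zero>\<^bsub>FZ\<^esub>"
  by (rule alg_hom_zero[OF FX.abelian_group FZ.abelian_group alg_hom_\<iota>])

lemma \<iota>_mult_P:
  assumes "u \<in> carrier (free_alg K X)"
  shows "\<forall>t\<in>P. \<iota> u \<otimes>\<^bsub>FZ\<^esub> t \<in> P \<and> t \<otimes>\<^bsub>FZ\<^esub> \<iota> u \<in> P"
  using assms
proof (induction u rule: R.free_alg_gen_induct)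
  case zero
  then show ?case using P_carrier zero_in_P by (simp add: \<iota>_zero)
next
  case (gen x)
  then show ?case
    using P_mult_closed_of_FY[OF new_gen_closed new_gen_mult_FY] \<iota>_gen by simp
next
  case (add a b)
  then show ?case
    using alg_hom_closed[OF alg_hom_\<iota>] P_carrier P_add_closed
    by (simp add: alg_hom_add[OF alg_hom_\<iota>] FZ.r_distr FZ.l_distr)
next
  case (mult a b)
  note closed = alg_hom_closed[OF alg_hom_\<iota> mult(1)] alg_hom_closed[OF alg_hom_\<iota> mult(2)]
  show ?case
  proof
    fix t assume t: "t \<in> P"
    have "(\<iota> a \<otimes>\<^bsub>FZ\<^esub> \<iota> b) \<otimes>\<^bsub>FZ\<^esub> t = \<iota> a \<otimes>\<^bsub>FZ\<^esub> (\<iota> b \<otimes>\<^bsub>FZ\<^esub> t)"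
      "t \<otimes>\<^bsub>FZ\<^esub> (\<iota> a \<otimes>\<^bsub>FZ\<^esub> \<iota> b) = (t \<otimes>\<^bsub>FZ\<^esub> \<iota> a) \<otimes>\<^bsub>FZ\<^esub> \<iota> b"
      using closed P_carrier[OF t] by (simp_all add: FZ.m_assoc)
    then show "\<iota> (a \<otimes>\<^bsub>free_alg K X\<^esub> b) \<otimes>\<^bsub>FZ\<^esub> t \<in> P \<and> t \<otimes>\<^bsub>FZ\<^esub> \<iota> (a \<otimes>\<^bsub>free_alg K X\<^esub> b) \<in> P"
      using mult.IH t by (simp add: alg_hom_mult[OF alg_hom_\<iota> mult(1,2)])
  qed
next
  case (smult k a)
  then show ?case
    using alg_hom_closed[OF alg_hom_\<iota>] P_carrier P_smult_closed
    by (simp add: alg_hom_smult[OF alg_hom_\<iota>] FZ.smult_mult_left FZ.smult_mult_right)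
qed

lemma FZ_decomposition:
  assumes "p \<in> carrier FZ"
  shows "\<exists>u\<in>carrier (free_alg K X). \<exists>t\<in>P. p = \<iota> u \<oplus>\<^bsub>FZ\<^esub> t"
  using assms
proof (induction p rule: R.free_alg_gen_induct)
  case zero
  have "\<zero>\<^bsub>FZ\<^esub> = \<iota> \<zero>\<^bsub>free_alg K X\<^esub> \<oplus>\<^bsub>FZ\<^esub> \<zero>\<^bsub>FZ\<^esub>" by (simp add: \<iota>_zero)
  then show ?case using zero_in_P FX.zero_closed by blast
next
  case (gen z)
  show ?case
  proof (cases "z \<in> Y")
    case True
    then have "free_gen K z \<in> P" by (intro FY_subset_P R.free_monom_closed) auto
    moreover have "free_gen K z = \<iota> \<zero>\<^bsub>free_alg K X\<^esub> \<oplus>\<^bsub>FZ\<^esub> free_gen K z"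
      using P_carrier[OF calculation] by (simp add: \<iota>_zero)
    ultimately show ?thesis using FX.zero_closed by blast
  next
    case False
    then obtain x where x: "x \<in> X" "z = shift x" using gen unfolding Z_def by blast
    then have "free_gen K z = \<iota> (free_gen K x) \<oplus>\<^bsub>FZ\<^esub> \<zero>\<^bsub>FZ\<^esub>"
      using new_gen_closed[OF x(1)] by (simp add: \<iota>_gen)
    moreover have "free_gen K x \<in> carrier (free_alg K X)"
      using x(1) by (intro R.free_monom_closed) auto
    ultimately show ?thesis using zero_in_P by blast
  qed
next
  case (add a b)
  then obtain u1 t1 u2 t2 where
    h: "u1 \<in> carrier (free_alg K X)" "t1 \<in> P" "a = \<iota> u1 \<oplus>\<^bsub>FZ\<^esub> t1"
      "u2 \<in> carrier (free_alg K X)" "t2 \<in> P" "b = \<iota> u2 \<oplus>\<^bsub>FZ\<^esub> t2"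
    by blast
  note closed = alg_hom_closed[OF alg_hom_\<iota> h(1)] alg_hom_closed[OF alg_hom_\<iota> h(4)]
    P_carrier[OF h(2)] P_carrier[OF h(5)]
  have "a \<oplus>\<^bsub>FZ\<^esub> b = \<iota> (u1 \<oplus>\<^bsub>free_alg K X\<^esub> u2) \<oplus>\<^bsub>FZ\<^esub> (t1 \<oplus>\<^bsub>FZ\<^esub> t2)"
    using closed by (simp add: h(3,6) alg_hom_add[OF alg_hom_\<iota> h(1,4)] FZ.a_ac)
  then show ?case using FX.a_closed[OF h(1,4)] P_add_closed[OF h(2,5)] by blast
next
  case (mult a b)
  then obtain u1 t1 u2 t2 where
    h: "u1 \<in> carrier (free_alg K X)" "t1 \<in> P" "a = \<iota> u1 \<oplus>\<^bsub>FZ\<^esub> t1"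
      "u2 \<in> carrier (free_alg K X)" "t2 \<in> P" "b = \<iota> u2 \<oplus>\<^bsub>FZ\<^esub> t2"
    by blast
  note closed = alg_hom_closed[OF alg_hom_\<iota> h(1)] alg_hom_closed[OF alg_hom_\<iota> h(4)]
    P_carrier[OF h(2)] P_carrier[OF h(5)]
  let ?t = "(\<iota> u1 \<otimes>\<^bsub>FZ\<^esub> t2 \<oplus>\<^bsub>FZ\<^esub> t1 \<otimes>\<^bsub>FZ\<^esub> \<iota> u2) \<oplus>\<^bsub>FZ\<^esub> t1 \<otimes>\<^bsub>FZ\<^esub> t2"
  have "?t \<in> P"
    using \<iota>_mult_P[OF h(1)] \<iota>_mult_P[OF h(4)] h(2,5) P_mult_closed[OF h(2,5)] P_add_closed
    by simp
  moreover have "a \<otimes>\<^bsub>FZ\<^esub> b = \<iota> (u1 \<otimes>\<^bsub>free_alg K X\<^esub> u2) \<oplus>\<^bsub>FZ\<^esub> ?t"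
    using closed by (simp add: h(3,6) alg_hom_mult[OF alg_hom_\<iota> h(1,4)] FZ.l_distr FZ.r_distr FZ.a_ac)
  ultimately show ?case using FX.m_closed[OF h(1,4)] by blast
next
  case (smult k a)
  then obtain u t where h: "u \<in> carrier (free_alg K X)" "t \<in> P" "a = \<iota> u \<oplus>\<^bsub>FZ\<^esub> t"
    by blast
  have "k \<odot>\<^bsub>FZ\<^esub> a = \<iota> (k \<odot>\<^bsub>free_alg K X\<^esub> u) \<oplus>\<^bsub>FZ\<^esub> k \<odot>\<^bsub>FZ\<^esub> t"
    using alg_hom_closed[OF alg_hom_\<iota> h(1)] P_carrier[OF h(2)] smult(1)
    by (simp add: h(3) alg_hom_smult[OF alg_hom_\<iota> smult(1) h(1)] FZ.smult_r_distr)
  then show ?case using FX.smult_closed[OF smult(1) h(1)] P_smult_closed[OF smult(1) h(2)] by blast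
qed

lemma P_ideal: "alg_ideal K FZ P"
proof (rule alg_idealI)
  show "P \<subseteq> carrier FZ" using P_carrier by blast
  show "\<zero>\<^bsub>FZ\<^esub> \<in> P" by (rule zero_in_P)
  show "s \<oplus>\<^bsub>FZ\<^esub> t \<in> P" if "s \<in> P" "t \<in> P" for s t using that by (rule P_add_closed)
  show "k \<odot>\<^bsub>FZ\<^esub> t \<in> P" if "k \<in> carrier K" "t \<in> P" for k t using that by (rule P_smult_closed)
  show "\<ominus>\<^bsub>FZ\<^esub> t \<in> P" if "t \<in> P" for t
    using P_smult_closed[OF R.a_inv_closed[OF R.one_closed] that] P_carrier[OF that]
    by (simp add: FZ.a_inv_eq_smult)
  have "a \<otimes>\<^bsub>FZ\<^esub> t \<in> P \<and> t \<otimes>\<^bsub>FZ\<^esub> a \<in> P" if a: "a \<in> carrier FZ" and t: "t \<in> P" for a t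
  proof -
    obtain u t' where h: "u \<in> carrier (free_alg K X)" "t' \<in> P" "a = \<iota> u \<oplus>\<^bsub>FZ\<^esub> t'"
      using FZ_decomposition[OF a] by blast
    note closed = alg_hom_closed[OF alg_hom_\<iota> h(1)] P_carrier[OF h(2)] P_carrier[OF t]
    show ?thesis
      using \<iota>_mult_P[OF h(1)] t P_mult_closed[OF h(2) t] P_mult_closed[OF t h(2)]
        P_add_closed closed by (simp add: h(3) FZ.l_distr FZ.r_distr)
  qed
  then show "a \<otimes>\<^bsub>FZ\<^esub> t \<in> P" "t \<otimes>\<^bsub>FZ\<^esub> a \<in> P" if "a \<in> carrier FZ" "t \<in> P" for a t
    using that by simp_all
qed

lemma \<psi>_preimage_in_P:
  assumes "u \<in> carrier (free_alg K X)" "\<psi> u \<in> B"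
  shows "\<iota> u \<in> P"
proof -
  have "alg_ideal K (free_alg K X) {u \<in> carrier (free_alg K X). \<iota> u \<in> P}"
    by (rule alg_ideal_vimage[OF FX.kalgebra_axioms FZ.kalgebra_axioms alg_hom_\<iota> P_ideal])
  moreover have "RX \<subseteq> {u \<in> carrier (free_alg K X). \<iota> u \<in> P}"
    using RX_subset reducible_in_P unfolding reducible_def by blast
  ultimately have "alg_ideal_span K (free_alg K X) RX \<subseteq> {u \<in> carrier (free_alg K X). \<iota> u \<in> P}"
    by (rule alg_ideal_span_least)
  then show ?thesis using assms \<psi>_preimage by blast
qed

lemma \<phi>_kernel_subset_N:
  assumes "q \<in> carrier (free_alg K Y)" "\<phi> q = \<zero>\<^bsub>A\<^esub>"
  shows "q \<in> N"
proof -
  have "alg_ideal K (free_alg K Y) {q \<in> carrier (free_alg K Y). id q \<in> N}"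
    by (rule alg_ideal_vimage[OF FY.kalgebra_axioms FZ.kalgebra_axioms
          R.alg_hom_free_alg_incl[OF Y_subset_Z] N_ideal])
  moreover have "RY \<subseteq> {q \<in> carrier (free_alg K Y). id q \<in> N}"
    using RY_subset alg_ideal_span_superset[of relators K FZ] unfolding N_def relators_def by auto
  ultimately have "alg_ideal_span K (free_alg K Y) RY \<subseteq> {q \<in> carrier (free_alg K Y). id q \<in> N}"
    by (rule alg_ideal_span_least)
  then show ?thesis using assms \<phi>_kernel by auto
qed

lemma kernel_e: "{p \<in> carrier FZ. e p = \<zero>\<^bsub>A\<^esub>} = N"
proof
  show "N \<subseteq> {p \<in> carrier FZ. e p = \<zero>\<^bsub>A\<^esub>}" by (rule N_subset_kernel)
  show "{p \<in> carrier FZ. e p = \<zero>\<^bsub>A\<^esub>} \<subseteq> N"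
  proof
    fix p assume "p \<in> {p \<in> carrier FZ. e p = \<zero>\<^bsub>A\<^esub>}"
    then have p: "p \<in> carrier FZ" "e p = \<zero>\<^bsub>A\<^esub>" by simp_all
    obtain u t where h: "u \<in> carrier (free_alg K X)" "t \<in> P" "p = \<iota> u \<oplus>\<^bsub>FZ\<^esub> t"
      using FZ_decomposition[OF p(1)] by blast
    obtain q where q: "q \<in> carrier (free_alg K Y)" "alg_coset FZ N t = alg_coset FZ N q"
      using h(2) unfolding P_def by blast
    have "e t = \<phi> q"
      using e_coset_cong[OF P_carrier[OF h(2)] FY_in_FZ[OF q(1)] q(2)] e_eq_\<phi>[OF q(1)] by simp
    then have "\<psi> u \<oplus>\<^bsub>A\<^esub> \<phi> q = \<zero>\<^bsub>A\<^esub>"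
      using p(2) alg_hom_add[OF alg_hom_e alg_hom_closed[OF alg_hom_\<iota> h(1)] P_carrier[OF h(2)]]
        e_\<iota>[OF h(1)] h(3) by simp
    then have "\<psi> u = \<ominus>\<^bsub>A\<^esub> \<phi> q"
      using alg_hom_closed[OF \<psi>_hom h(1)] alg_hom_closed[OF \<phi>_hom q(1)]
      by (metis A.add.inv_equality A.a_comm)
    moreover have "\<phi> q \<in> B" using q(1) \<phi>_image by blast
    ultimately have "\<psi> u \<in> B" using alg_ideal_a_inv[OF ideal] by simp
    then have "p \<in> P"
      using \<psi>_preimage_in_P[OF h(1)] h(2,3) P_add_closed by simp
    then obtain r where r: "r \<in> carrier (free_alg K Y)" "alg_coset FZ N p = alg_coset FZ N r"
      unfolding P_def by blast
    have "\<phi> r = \<zero>\<^bsub>A\<^esub>"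
      using e_coset_cong[OF p(1) FY_in_FZ[OF r(1)] r(2)] e_eq_\<phi>[OF r(1)] p(2) by simp
    then have "alg_coset FZ N r = \<zero>\<^bsub>quot_alg K FZ N\<^esub>"
      using FZ.alg_coset_eq_zero_iff[OF N_ideal FY_in_FZ[OF r(1)]] \<phi>_kernel_subset_N[OF r(1)] by simp
    then show "p \<in> N"
      using r(2) FZ.alg_coset_eq_zero_iff[OF N_ideal p(1)] by simp
  qed
qed

lemma fp_algebra: "fp_algebra K A"
proof -
  have "fg_ideal K FZ {p \<in> carrier FZ. e p = \<zero>\<^bsub>A\<^esub>}"
    unfolding kernel_e N_def by (rule FZ.fg_ideal_span[OF finite_relators relators_subset])
  then show ?thesis
    using fp_algebra_iff_surj_hom[OF cring kalgebra] finite_Z alg_hom_e e_onto by blast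
qed

end

context kalgebra begin

lemma lift_quotient_presentation:
  fixes X :: "nat set"
  assumes B: "alg_ideal K A B" and p: "alg_hom K (free_alg K X) (quot_alg K A B) p"
    and onto: "p ` carrier (free_alg K X) = carrier (quot_alg K A B)"
  shows "\<exists>\<psi>. alg_hom K (free_alg K X) A \<psi> \<and>
    (\<forall>a\<in>carrier A. \<exists>u\<in>carrier (free_alg K X). a \<ominus>\<^bsub>A\<^esub> \<psi> u \<in> B) \<and>
    {u \<in> carrier (free_alg K X). \<psi> u \<in> B} = {u \<in> carrier (free_alg K X). p u = \<zero>\<^bsub>quot_alg K A B\<^esub>}"
proof -
  obtain \<psi> where \<psi>: "alg_hom K (free_alg K X) A \<psi>"
    and lifts: "\<And>u. u \<in> carrier (free_alg K X) \<Longrightarrow> alg_coset A B (\<psi> u) = p u"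
    using free_alg_hom_lift[OF kalgebra_quot_alg[OF B] alg_hom_alg_coset[OF B] _ p]
    by (metis quot_alg_carrier)
  have "\<exists>u\<in>carrier (free_alg K X). a \<ominus>\<^bsub>A\<^esub> \<psi> u \<in> B" if a: "a \<in> carrier A" for a
  proof -
    have "alg_coset A B a \<in> p ` carrier (free_alg K X)" using a onto by (simp add: quot_alg_carrier)
    then obtain u where u: "u \<in> carrier (free_alg K X)" "alg_coset A B a = p u" by blast
    then have "alg_coset A B a = alg_coset A B (\<psi> u)" using lifts by simp
    then show ?thesis using u(1) a alg_hom_closed[OF \<psi> u(1)] alg_coset_eq_iff[OF B] by blast
  qed
  moreover have "\<psi> u \<in> B \<longleftrightarrow> p u = \<zero>\<^bsub>quot_alg K A B\<^esub>" if "u \<in> carrier (free_alg K X)" for u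
    using alg_coset_eq_zero_iff[OF B alg_hom_closed[OF \<psi> that]] lifts[OF that] by simp
  then have "{u \<in> carrier (free_alg K X). \<psi> u \<in> B} =
      {u \<in> carrier (free_alg K X). p u = \<zero>\<^bsub>quot_alg K A B\<^esub>}" by blast
  ultimately show ?thesis using \<psi> by blast
qed

lemma fg_algebra_extension:
  assumes B: "alg_ideal K A B"
    and fg_B: "fg_algebra K (A\<lparr>carrier := B\<rparr>)" and fg_Q: "fg_algebra K (quot_alg K A B)"
  shows "fg_algebra K A"
proof -
  obtain Y \<phi> where Y: "finite Y" "alg_hom K (free_alg K Y) (A\<lparr>carrier := B\<rparr>) \<phi>"
      "\<phi> ` carrier (free_alg K Y) = carrier (A\<lparr>carrier := B\<rparr>)"
    using fg_B unfolding fg_algebra_iff_surj_hom[OF R.is_cring kalgebra_ideal[OF B]] by blast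
  obtain X p where X: "finite X" "alg_hom K (free_alg K X) (quot_alg K A B) p"
      "p ` carrier (free_alg K X) = carrier (quot_alg K A B)"
    using fg_Q unfolding fg_algebra_iff_surj_hom[OF R.is_cring kalgebra_quot_alg[OF B]] by blast
  obtain \<psi> where \<psi>: "alg_hom K (free_alg K X) A \<psi>"
      "\<forall>a\<in>carrier A. \<exists>u\<in>carrier (free_alg K X). a \<ominus>\<^bsub>A\<^esub> \<psi> u \<in> B"
    using lift_quotient_presentation[OF B X(2,3)] by blast
  interpret ideal_extension K A B X Y \<phi> \<psi>
    using Y(3) by (intro ideal_extension.intro[OF R.is_cring kalgebra_axioms B X(1) Y(1)
        alg_hom_widen_codomain[OF Y(2) alg_ideal_subset[OF B]] _ \<psi>(1) \<psi>(2)[rule_format]]) simp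
  show ?thesis by (rule fg_algebra)
qed

lemma fp_algebra_extension:
  assumes B: "alg_ideal K A B"
    and fp_B: "fp_algebra K (A\<lparr>carrier := B\<rparr>)" and fp_Q: "fp_algebra K (quot_alg K A B)"
  shows "fp_algebra K A"
proof -
  obtain Y \<phi> where Y: "finite Y" "alg_hom K (free_alg K Y) (A\<lparr>carrier := B\<rparr>) \<phi>"
      "\<phi> ` carrier (free_alg K Y) = carrier (A\<lparr>carrier := B\<rparr>)"
      "fg_ideal K (free_alg K Y) {q \<in> carrier (free_alg K Y). \<phi> q = \<zero>\<^bsub>A\<lparr>carrier := B\<rparr>\<^esub>}"
    using fp_B unfolding fp_algebra_iff_surj_hom[OF R.is_cring kalgebra_ideal[OF B]] by blast
  obtain X p where X: "finite X" "alg_hom K (free_alg K X) (quot_alg K A B) p"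
      "p ` carrier (free_alg K X) = carrier (quot_alg K A B)"
      "fg_ideal K (free_alg K X) {u \<in> carrier (free_alg K X). p u = \<zero>\<^bsub>quot_alg K A B\<^esub>}"
    using fp_Q unfolding fp_algebra_iff_surj_hom[OF R.is_cring kalgebra_quot_alg[OF B]] by blast
  obtain \<psi> where \<psi>: "alg_hom K (free_alg K X) A \<psi>"
      "\<forall>a\<in>carrier A. \<exists>u\<in>carrier (free_alg K X). a \<ominus>\<^bsub>A\<^esub> \<psi> u \<in> B"
      "{u \<in> carrier (free_alg K X). \<psi> u \<in> B} =
        {u \<in> carrier (free_alg K X). p u = \<zero>\<^bsub>quot_alg K A B\<^esub>}"
    using lift_quotient_presentation[OF B X(2,3)] by blast
  obtain RX where RX: "finite RX" "RX \<subseteq> carrier (free_alg K X)"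
      "{u \<in> carrier (free_alg K X). \<psi> u \<in> B} = alg_ideal_span K (free_alg K X) RX"
    using X(4) unfolding \<psi>(3) fg_ideal_iff_span by blast
  obtain RY where RY: "finite RY" "RY \<subseteq> carrier (free_alg K Y)"
      "{q \<in> carrier (free_alg K Y). \<phi> q = \<zero>\<^bsub>A\<^esub>} = alg_ideal_span K (free_alg K Y) RY"
    using Y(4) unfolding fg_ideal_iff_span by auto
  interpret ideal_extension K A B X Y \<phi> \<psi>
    using Y(3) by (intro ideal_extension.intro[OF R.is_cring kalgebra_axioms B X(1) Y(1)
        alg_hom_widen_codomain[OF Y(2) alg_ideal_subset[OF B]] _ \<psi>(1) \<psi>(2)[rule_format]]) simp
  interpret ideal_extension_fp K A B X Y \<phi> \<psi> RX RY
    by (intro ideal_extension_fp.intro ideal_extension_fp_axioms.intro RX RY ideal_extension_axioms)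
  show ?thesis by (rule fp_algebra)
qed

end

theorem lemma2p2:
  fixes K :: "('k,'e) ring_scheme" and A :: "('k,'a) module" and B :: "'a set"
  assumes "cring K" and "K_algebra K A" and "alg_ideal K A B"
  shows "(fg_algebra K (A\<lparr>carrier := B\<rparr>) \<and> fg_algebra K (quot_alg K A B) \<longrightarrow> fg_algebra K A)
       \<and> (fp_algebra K (A\<lparr>carrier := B\<rparr>) \<and> fp_algebra K (quot_alg K A B) \<longrightarrow> fp_algebra K A)"
proof -
  interpret kalgebra K A using assms(2) by (simp add: kalgebra_iff_K_algebra)
  show ?thesis using fg_algebra_extension[OF assms(3)] fp_algebra_extension[OF assms(3)] by blast
qed

end
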